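(* For $1\le j\le n$ and $0\le r\le n-j$ set $p^{(r)}_j=(-1)^rx_n^r\,e_{n-j-r}(x_1,\dots,x_{n-1})$. Then $p^{(r)}_j\in\mathcal P_n^{S_{n-1}\times S_1}$ and $\partial_{c[j]}(p^{(r)}_j)=1$. Consequently, for any choice of $r_j\in\{0,\dots,n-j\}$ for each $j$, the elements $\omega^{(r_j)}_j=\sum_{k\ge j}\partial_{c[k]}(p^{(r_j)}_j)\,\omega_k$ lie in $\Lambda^\omega_n$ and multiplication gives a ring isomorphism $\Lambda_n\otimes\bigwedge[\omega^{(r_1)}_1,\dots,\omega^{(r_n)}_n]\cong\Lambda^\omega_n$. Moreover $p^{(0)}_j=e_{n-j}(x_1,\dots,x_{n-1})$ and $p^{(n-j)}_j=(-1)^{n-j}h_{n-j}(x_n)=(-1)^{n-j}x_n^{n-j}$.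
   Context: $\mathcal P_n=\mathbb Q[x_1,\dots,x_n]$, $\Lambda_n=\mathcal P_n^{S_n}$, $\mathcal P^\omega_n=\mathcal P_n\otimes\bigwedge[\omega_1,\dots,\omega_n]$ ($\omega_i$ odd), $S_n$ acting by ring automorphisms via $s_i(x_j)=x_{s_i(j)}$, $s_i(\omega_j)=\omega_j+\delta_{ij}(x_j-x_{j+1})\omega_{j+1}$; $\Lambda^\omega_n=(\mathcal P^\omega_n)^{S_n}$. $\partial_i=(1-s_i)/(x_i-x_{i+1})$; $c[j]=s_j\cdots s_{n-1}$ ($c[n]=\mathrm{id}$), $\partial_{c[j]}=\partial_j\partial_{j+1}\cdots\partial_{n-1}$. $e_m$, $h_m$: elementary and complete homogeneous symmetric polynomials. $\mathcal P_n^{S_{n-1}\times S_1}$: polynomials symmetric in $x_1,\dots,x_{n-1}$. *)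

theory Defs
  imports Complex_Main "HOL-Library.Poly_Mapping"
begin

text \<open>Multivariate polynomials with rational coefficients: finitely supported maps from
  monomials (exponent vectors nat =>0 nat, variable x_i has index i) to rat.\<close>
type_synonym mpoly = "(nat \<Rightarrow>\<^sub>0 nat) \<Rightarrow>\<^sub>0 rat"

definition X :: "nat \<Rightarrow> mpoly" where
  "X i = Poly_Mapping.single (Poly_Mapping.single i 1) 1"

definition monom :: "(nat \<Rightarrow>\<^sub>0 nat) \<Rightarrow> mpoly" where
  "monom \<alpha> = Poly_Mapping.single \<alpha> 1"

definition Pn :: "nat \<Rightarrow> mpoly set" where
  "Pn n = {p. \<forall>\<alpha>\<in>Poly_Mapping.keys p. Poly_Mapping.keys \<alpha> \<subseteq> {1..n}}"

definition tr :: "nat \<Rightarrow> nat \<Rightarrow> nat" where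
  "tr i k = (if k = i then i + 1 else if k = i + 1 then i else k)"

text \<open>s_i acting on polynomials: s_i(x_j) = x_{s_i(j)}, extended as ring automorphism,
  i.e. (s_i p)(alpha) = p(alpha o s_i) on coefficients.\<close>
definition swp :: "nat \<Rightarrow> mpoly \<Rightarrow> mpoly" where
  "swp i p = Poly_Mapping.map_key (\<lambda>\<alpha>. Poly_Mapping.map_key (tr i) \<alpha>) p"

text \<open>Divided difference operator: the exact quotient (f - s_i f)/(x_i - x_{i+1}).\<close>
definition dd :: "nat \<Rightarrow> mpoly \<Rightarrow> mpoly" where
  "dd i f = (THE g. (X i - X (i + 1)) * g = f - swp i f)"

text \<open>partial_{c[k]} = partial_k partial_{k+1} ... partial_{n-1}  (identity for k = n)\<close>
definition dc :: "nat \<Rightarrow> nat \<Rightarrow> mpoly \<Rightarrow> mpoly" where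
  "dc n k f = foldr dd [k..<n] f"

definition elem :: "nat set \<Rightarrow> nat \<Rightarrow> mpoly" where
  "elem A m = (\<Sum>T\<in>{T. T \<subseteq> A \<and> card T = m}. \<Prod>i\<in>T. X i)"

definition hcompl :: "nat set \<Rightarrow> nat \<Rightarrow> mpoly" where
  "hcompl A m = (\<Sum>\<alpha>\<in>{\<alpha>. Poly_Mapping.keys \<alpha> \<subseteq> A \<and> (\<Sum>i\<in>A. Poly_Mapping.lookup \<alpha> i) = m}. monom \<alpha>)"

definition Lam :: "nat \<Rightarrow> mpoly set" where
  "Lam n = {p \<in> Pn n. \<forall>i\<in>{1..<n}. swp i p = p}"

definition Pn1 :: "nat \<Rightarrow> mpoly set" where
  "Pn1 n = {p \<in> Pn n. \<forall>i\<in>{1..<n-1}. swp i p = p}"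

text \<open>An element is a coefficient function on subsets S of {1..n}; a(S) is the coefficient
  of omega_S = omega_{s_1} ... omega_{s_k} (s_1 < ... < s_k).\<close>
type_synonym ext = "nat set \<Rightarrow> mpoly"

definition ext_carrier :: "nat \<Rightarrow> ext set" where
  "ext_carrier n = {a. (\<forall>S. a S \<noteq> 0 \<longrightarrow> S \<subseteq> {1..n}) \<and> (\<forall>S. a S \<in> Pn n)}"

definition ext_add :: "ext \<Rightarrow> ext \<Rightarrow> ext" where
  "ext_add a b = (\<lambda>S. a S + b S)"

text \<open>sign of omega_T omega_U = sgn * omega_{T \<union> U} for disjoint T, U\<close>
definition esgn :: "nat set \<Rightarrow> nat set \<Rightarrow> mpoly" where
  "esgn T U = (-1) ^ card {(t, u). t \<in> T \<and> u \<in> U \<and> u < t}"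

definition ext_mul :: "ext \<Rightarrow> ext \<Rightarrow> ext" where
  "ext_mul a b = (\<lambda>S. \<Sum>T\<in>Pow S. esgn T (S - T) * a T * b (S - T))"

definition ext_one :: ext where
  "ext_one = (\<lambda>S. if S = {} then 1 else 0)"

definition ext_scal :: "mpoly \<Rightarrow> ext" where
  "ext_scal f = (\<lambda>S. if S = {} then f else 0)"

definition omega :: "nat \<Rightarrow> ext" where
  "omega k = (\<lambda>S. if S = {k} then 1 else 0)"

definition ext_sum :: "('i \<Rightarrow> ext) \<Rightarrow> 'i set \<Rightarrow> ext" where
  "ext_sum g A = (\<lambda>S. \<Sum>x\<in>A. g x S)"

definition ext_prodlist :: "ext list \<Rightarrow> ext" where
  "ext_prodlist xs = foldr ext_mul xs ext_one"

definition act_gen :: "nat \<Rightarrow> nat \<Rightarrow> ext" where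
  "act_gen i j = (if j = i then ext_add (omega j) (ext_mul (ext_scal (X j - X (j + 1))) (omega (j + 1)))
                  else omega j)"

definition act :: "nat \<Rightarrow> nat \<Rightarrow> ext \<Rightarrow> ext" where
  "act n i a = ext_sum (\<lambda>S. ext_mul (ext_scal (swp i (a S)))
                 (ext_prodlist (map (act_gen i) (sorted_list_of_set S)))) (Pow {1..n})"

text \<open>Lambda^omega_n: S_n-invariants (S_n is generated by s_1, ..., s_{n-1}).\<close>
definition LamOm :: "nat \<Rightarrow> ext set" where
  "LamOm n = {a \<in> ext_carrier n. \<forall>i\<in>{1..<n}. act n i a = a}"

definition pjr :: "nat \<Rightarrow> nat \<Rightarrow> nat \<Rightarrow> mpoly" where
  "pjr n j r = (-1) ^ r * X n ^ r * elem {1..<n} (n - j - r)"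

definition omr :: "nat \<Rightarrow> nat \<Rightarrow> nat \<Rightarrow> ext" where
  "omr n j r = ext_sum (\<lambda>k. ext_mul (ext_scal (dc n k (pjr n j r))) (omega k)) {j..n}"

text \<open>Lambda_n \<otimes> exterior algebra on n odd generators: the exterior algebra over Lambda_n,
  i.e. elements of P^omega_n whose coefficients are symmetric, with the same product.\<close>
definition tens_carrier :: "nat \<Rightarrow> ext set" where
  "tens_carrier n = {f \<in> ext_carrier n. \<forall>S. f S \<in> Lam n}"

definition Phi :: "nat \<Rightarrow> (nat \<Rightarrow> nat) \<Rightarrow> ext \<Rightarrow> ext" where
  "Phi n r f = ext_sum (\<lambda>S. ext_mul (ext_scal (f S))
                 (ext_prodlist (map (\<lambda>j. omr n j (r j)) (sorted_list_of_set S)))) (Pow {1..n})"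

end

theory Submission imports Defs begin

text \<open>
  Writing \<open>x\<^sub>n e\<^sub>t(x\<^sub>1..x\<^sub>n\<^sub>-\<^sub>1) = e\<^sub>t\<^sub>+\<^sub>1(x\<^sub>1..x\<^sub>n) - e\<^sub>t\<^sub>+\<^sub>1(x\<^sub>1..x\<^sub>n\<^sub>-\<^sub>1)\<close> and using that divided differences
  vanish on fully symmetric polynomials and are linear over them, \<open>\<partial>\<^sub>c\<^sub>[\<^sub>k\<^sub>]\<close> of \<open>x\<^sub>n\<^sup>a e\<^sub>t(x\<^sub>1..x\<^sub>n\<^sub>-\<^sub>1)\<close> is
  \<open>(-1)\<^sup>a e\<^sub>a\<^sub>+\<^sub>t\<^sub>-\<^sub>n\<^sub>+\<^sub>k(x\<^sub>1..x\<^sub>k\<^sub>-\<^sub>1)\<close>; this gives \<open>\<partial>\<^sub>c\<^sub>[\<^sub>j\<^sub>] p = 1\<close> and shows that \<open>\<partial>\<^sub>c\<^sub>[\<^sub>k\<^sub>] p\<close> is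
  symmetric under every \<open>s\<^sub>i\<close> except \<open>s\<^sub>k\<^sub>-\<^sub>1\<close>. Since \<open>\<partial>\<^sub>c\<^sub>[\<^sub>k\<^sub>] = \<partial>\<^sub>k \<partial>\<^sub>c\<^sub>[\<^sub>k\<^sub>+\<^sub>1\<^sub>]\<close>, the coefficients of
  \<open>\<omega>\<^sup>(\<^sup>r\<^sup>)\<^sub>j = \<Sum>\<^sub>k \<partial>\<^sub>c\<^sub>[\<^sub>k\<^sub>] p \<omega>\<^sub>k\<close> then satisfy the criterion for \<open>s\<^sub>i\<close>-invariance of a linear form.

  For the isomorphism, \<open>\<omega>\<^sup>(\<^sup>r\<^sup>)\<^sub>j = \<omega>\<^sub>j + (terms \<omega>\<^sub>k, k > j)\<close>, so the products \<open>\<omega>\<^sup>(\<^sup>r\<^sup>)\<^sub>S\<close> are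
  unitriangular with respect to the weight \<open>\<Sum>S\<close> of subsets. This makes \<open>Phi\<close> injective, and
  surjective by descending induction on the lowest weight of an invariant element, whose
  lowest-weight coefficients are symmetric because \<open>s\<^sub>i\<close> acts unitriangularly on the \<open>\<omega>\<^sub>k\<close> too.
\<close>

abbreviation PM_lookup where "PM_lookup \<equiv> Poly_Mapping.lookup"
abbreviation PM_single where "PM_single \<equiv> Poly_Mapping.single"
abbreviation PM_keys where "PM_keys \<equiv> Poly_Mapping.keys"

lemma tr_tr [simp]: "tr i (tr i k) = k"
  by (simp add: tr_def)

lemma inj_tr [simp]: "inj (tr i)"
  by (metis injI tr_tr)

definition swap_exps :: "nat \<Rightarrow> (nat \<Rightarrow>\<^sub>0 nat) \<Rightarrow> (nat \<Rightarrow>\<^sub>0 nat)" where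
  "swap_exps i \<alpha> = Poly_Mapping.map_key (tr i) \<alpha>"

lemma lookup_swap_exps: "PM_lookup (swap_exps i \<alpha>) k = PM_lookup \<alpha> (tr i k)"
  by (simp add: swap_exps_def map_key.rep_eq)

lemma swap_exps_swap_exps [simp]: "swap_exps i (swap_exps i \<alpha>) = \<alpha>"
  by (rule poly_mapping_eqI) (simp add: lookup_swap_exps)

lemma inj_swap_exps [simp]: "inj (swap_exps i)"
  by (metis injI swap_exps_swap_exps)

lemma swap_exps_add: "swap_exps i (\<alpha> + \<beta>) = swap_exps i \<alpha> + swap_exps i \<beta>"
  by (rule poly_mapping_eqI) (simp add: lookup_swap_exps lookup_add)

lemma swap_exps_zero [simp]: "swap_exps i 0 = 0"
  by (rule poly_mapping_eqI) (simp add: lookup_swap_exps)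

lemma swap_exps_single: "swap_exps i (PM_single k e) = PM_single (tr i k) e"
  by (rule poly_mapping_eqI) (simp add: lookup_swap_exps lookup_single when_def, metis tr_tr)

lemma keys_swap_exps: "PM_keys (swap_exps i \<alpha>) = tr i ` PM_keys \<alpha>"
proof (intro set_eqI iffI)
  fix k assume "k \<in> PM_keys (swap_exps i \<alpha>)"
  then have "tr i k \<in> PM_keys \<alpha>" by (simp add: in_keys_iff lookup_swap_exps)
  then show "k \<in> tr i ` PM_keys \<alpha>" using image_eqI[of k "tr i" "tr i k"] by simp
qed (auto simp: in_keys_iff lookup_swap_exps)

lemma swp_conv_map_key: "swp i p = Poly_Mapping.map_key (swap_exps i) p"
  by (simp add: swp_def swap_exps_def[abs_def])

lemma lookup_swp: "PM_lookup (swp i p) \<alpha> = PM_lookup p (swap_exps i \<alpha>)"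
  by (simp add: swp_conv_map_key map_key.rep_eq)

lemma swp_single: "swp i (PM_single \<alpha> c) = PM_single (swap_exps i \<alpha>) c"
  by (rule poly_mapping_eqI) (simp add: lookup_swp lookup_single when_def, metis swap_exps_swap_exps)

lemma swp_swp [simp]: "swp i (swp i p) = p"
  by (rule poly_mapping_eqI) (simp add: lookup_swp)

lemma swp_add: "swp i (p + q) = swp i p + swp i q"
  by (rule poly_mapping_eqI) (simp add: lookup_swp lookup_add)

lemma swp_zero [simp]: "swp i 0 = 0"
  by (rule poly_mapping_eqI) (simp add: lookup_swp)

lemma swp_sum: "swp i (sum f A) = (\<Sum>a\<in>A. swp i (f a))"
  by (induction A rule: infinite_finite_induct) (simp_all add: swp_add)

lemma poly_mapping_sum_single:
  "(p :: 'a \<Rightarrow>\<^sub>0 'b::comm_monoid_add) = (\<Sum>\<alpha>\<in>PM_keys p. PM_single \<alpha> (PM_lookup p \<alpha>))"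
proof (rule poly_mapping_eqI)
  fix k
  have "PM_lookup (\<Sum>\<alpha>\<in>PM_keys p. PM_single \<alpha> (PM_lookup p \<alpha>)) k
      = (\<Sum>\<alpha>\<in>PM_keys p. (PM_lookup p \<alpha> when \<alpha> = k))"
    by (simp add: lookup_sum lookup_single)
  also have "\<dots> = PM_lookup p k"
    by (cases "k \<in> PM_keys p") (simp_all add: when_def in_keys_iff)
  finally show "PM_lookup p k = PM_lookup (\<Sum>\<alpha>\<in>PM_keys p. PM_single \<alpha> (PM_lookup p \<alpha>)) k"
    by simp
qed

lemma mpoly_mult_expand:
  "(p::mpoly) * q = (\<Sum>\<alpha>\<in>PM_keys p. \<Sum>\<beta>\<in>PM_keys q. PM_single (\<alpha> + \<beta>) (PM_lookup p \<alpha> * PM_lookup q \<beta>))"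
proof -
  have "p * q = (\<Sum>\<alpha>\<in>PM_keys p. PM_single \<alpha> (PM_lookup p \<alpha>)) * (\<Sum>\<beta>\<in>PM_keys q. PM_single \<beta> (PM_lookup q \<beta>))"
    using poly_mapping_sum_single[of p] poly_mapping_sum_single[of q] by simp
  also have "\<dots> = (\<Sum>\<alpha>\<in>PM_keys p. \<Sum>\<beta>\<in>PM_keys q. PM_single \<alpha> (PM_lookup p \<alpha>) * PM_single \<beta> (PM_lookup q \<beta>))"
    by (simp add: sum_distrib_left sum_distrib_right) (rule sum.swap)
  finally show ?thesis by (simp add: mult_single)
qed

lemma swp_mult: "swp i (p * q) = swp i p * swp i q"
proof -
  have "swp i (p * q) = (\<Sum>\<alpha>\<in>PM_keys p. \<Sum>\<beta>\<in>PM_keys q.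
          PM_single (swap_exps i \<alpha> + swap_exps i \<beta>) (PM_lookup p \<alpha> * PM_lookup q \<beta>))"
    by (subst mpoly_mult_expand) (simp add: swp_sum swp_single swap_exps_add)
  also have "\<dots> = (\<Sum>\<alpha>\<in>PM_keys p. PM_single (swap_exps i \<alpha>) (PM_lookup p \<alpha>))
                 * (\<Sum>\<beta>\<in>PM_keys q. PM_single (swap_exps i \<beta>) (PM_lookup q \<beta>))"
    by (simp add: sum_distrib_left sum_distrib_right mult_single) (rule sum.swap)
  also have "\<dots> = swp i p * swp i q"
    by (subst (3) poly_mapping_sum_single, subst (4) poly_mapping_sum_single) (simp add: swp_sum swp_single)
  finally show ?thesis .
qed

lemma swp_one [simp]: "swp i 1 = 1"
  using swp_single[of i 0 1] by simp

lemma swp_X: "swp i (X k) = X (tr i k)"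
  by (simp add: X_def swp_single swap_exps_single)

definition mpoly_hom :: "(mpoly \<Rightarrow> mpoly) \<Rightarrow> bool" where
  "mpoly_hom \<phi> \<longleftrightarrow> (\<forall>x y. \<phi> (x + y) = \<phi> x + \<phi> y) \<and> (\<forall>x y. \<phi> (x * y) = \<phi> x * \<phi> y) \<and> \<phi> 1 = 1"

lemma mpoly_hom_swp: "mpoly_hom (swp i)"
  by (simp add: mpoly_hom_def swp_add swp_mult)

lemma mpoly_hom_id: "mpoly_hom (\<lambda>x. x)"
  by (simp add: mpoly_hom_def)

context
  fixes \<phi> :: "mpoly \<Rightarrow> mpoly"
  assumes \<phi>: "mpoly_hom \<phi>"
begin

lemma mpoly_hom_add: "\<phi> (x + y) = \<phi> x + \<phi> y"
  using \<phi> by (simp add: mpoly_hom_def)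

lemma mpoly_hom_mult: "\<phi> (x * y) = \<phi> x * \<phi> y"
  using \<phi> by (simp add: mpoly_hom_def)

lemma mpoly_hom_one: "\<phi> 1 = 1"
  using \<phi> by (simp add: mpoly_hom_def)

lemma mpoly_hom_zero: "\<phi> 0 = 0"
  using mpoly_hom_add[of 0 0] by simp

lemma mpoly_hom_uminus: "\<phi> (- x) = - \<phi> x"
  using mpoly_hom_add[of x "- x"] mpoly_hom_zero by (simp add: eq_neg_iff_add_eq_0 add.commute)

lemma mpoly_hom_diff: "\<phi> (x - y) = \<phi> x - \<phi> y"
  using mpoly_hom_add[of x "- y"] mpoly_hom_uminus[of y] by simp

lemma mpoly_hom_sum: "\<phi> (sum f A) = (\<Sum>a\<in>A. \<phi> (f a))"
  by (induction A rule: infinite_finite_induct) (simp_all add: mpoly_hom_zero mpoly_hom_add)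

lemma mpoly_hom_prod: "\<phi> (prod f A) = (\<Prod>a\<in>A. \<phi> (f a))"
  by (induction A rule: infinite_finite_induct) (simp_all add: mpoly_hom_one mpoly_hom_mult)

lemma mpoly_hom_power: "\<phi> (x ^ k) = \<phi> x ^ k"
  by (induction k) (simp_all add: mpoly_hom_one mpoly_hom_mult)

lemma mpoly_hom_neg_one_power: "\<phi> ((-1) ^ k) = (-1) ^ k"
  by (simp add: mpoly_hom_power mpoly_hom_uminus mpoly_hom_one)

end

lemmas swp_uminus [simp] = mpoly_hom_uminus[OF mpoly_hom_swp]
  and swp_neg_one_power [simp] = mpoly_hom_neg_one_power[OF mpoly_hom_swp]
  and swp_diff = mpoly_hom_diff[OF mpoly_hom_swp]
  and swp_prod = mpoly_hom_prod[OF mpoly_hom_swp]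
  and swp_power = mpoly_hom_power[OF mpoly_hom_swp]

definition vars_in :: "nat set \<Rightarrow> mpoly set" where
  "vars_in A = {p. \<forall>\<alpha>\<in>PM_keys p. PM_keys \<alpha> \<subseteq> A}"

lemma Pn_eq_vars_in: "Pn n = vars_in {1..n}"
  by (simp add: Pn_def vars_in_def)

lemma vars_in_add: "p \<in> vars_in A \<Longrightarrow> q \<in> vars_in A \<Longrightarrow> p + q \<in> vars_in A"
  unfolding vars_in_def using keys_add[of p q] by blast

lemma vars_in_uminus: "p \<in> vars_in A \<Longrightarrow> - p \<in> vars_in A"
  unfolding vars_in_def by simp

lemma vars_in_diff: "p \<in> vars_in A \<Longrightarrow> q \<in> vars_in A \<Longrightarrow> p - q \<in> vars_in A"
  unfolding diff_conv_add_uminus by (intro vars_in_add vars_in_uminus)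

lemma vars_in_const [simp]: "PM_single 0 c \<in> vars_in A"
  unfolding vars_in_def by simp

lemma vars_in_zero [simp]: "0 \<in> vars_in A"
  using vars_in_const[of 0] by simp

lemma vars_in_one [simp]: "1 \<in> vars_in A"
  using vars_in_const[of 1] by simp

lemma keys_add_exps: "PM_keys ((\<alpha>::nat \<Rightarrow>\<^sub>0 nat) + \<beta>) = PM_keys \<alpha> \<union> PM_keys \<beta>"
  by (rule set_eqI) (simp add: in_keys_iff lookup_add)

lemma vars_in_mult: "p \<in> vars_in A \<Longrightarrow> q \<in> vars_in A \<Longrightarrow> p * q \<in> vars_in A"
  unfolding vars_in_def using keys_mult[of p q] by (fastforce simp: keys_add_exps)

lemma vars_in_X: "k \<in> A \<Longrightarrow> X k \<in> vars_in A"
  unfolding vars_in_def X_def by simp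

lemma vars_in_sum: "(\<And>a. a \<in> B \<Longrightarrow> f a \<in> vars_in A) \<Longrightarrow> sum f B \<in> vars_in A"
  by (induction B rule: infinite_finite_induct) (simp_all add: vars_in_add)

lemma vars_in_prod: "(\<And>a. a \<in> B \<Longrightarrow> f a \<in> vars_in A) \<Longrightarrow> prod f B \<in> vars_in A"
  by (induction B rule: infinite_finite_induct) (simp_all add: vars_in_mult)

lemma vars_in_power: "p \<in> vars_in A \<Longrightarrow> p ^ m \<in> vars_in A"
  by (induction m) (simp_all add: vars_in_mult)

lemma vars_in_neg_one_power [simp]: "(-1) ^ m \<in> vars_in A"
  by (intro vars_in_power vars_in_uminus vars_in_one)

lemma vars_in_mono: "p \<in> vars_in A \<Longrightarrow> A \<subseteq> B \<Longrightarrow> p \<in> vars_in B"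
  unfolding vars_in_def by blast

lemma X_power: "X k ^ e = PM_single (PM_single k e) 1"
  by (induction e) (simp_all add: X_def mult_single single_add[symmetric] add.commute)

lemma prod_X_power: "finite K \<Longrightarrow> (\<Prod>k\<in>K. X k ^ f k) = PM_single (\<Sum>k\<in>K. PM_single k (f k)) 1"
  by (induction K rule: finite_induct) (simp_all add: X_power mult_single)

lemma vars_in_induct [consumes 1, case_names add mult const var]:
  assumes p: "p \<in> vars_in A"
    and add: "\<And>p q. p \<in> vars_in A \<Longrightarrow> q \<in> vars_in A \<Longrightarrow> P p \<Longrightarrow> P q \<Longrightarrow> P (p + q)"
    and mult: "\<And>p q. p \<in> vars_in A \<Longrightarrow> q \<in> vars_in A \<Longrightarrow> P p \<Longrightarrow> P q \<Longrightarrow> P (p * q)"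
    and const: "\<And>c. P (PM_single 0 c)"
    and var: "\<And>k. k \<in> A \<Longrightarrow> P (X k)"
  shows "P p"
proof -
  define Q where "Q p \<longleftrightarrow> p \<in> vars_in A \<and> P p" for p
  have Q_add: "Q (p + q)" and Q_mult: "Q (p * q)" if "Q p" "Q q" for p q
    using that add mult by (auto simp: Q_def intro: vars_in_add vars_in_mult)
  have Q_const: "Q (PM_single 0 c)" for c
    using const by (simp add: Q_def)
  have sum: "Q (sum f B)" if "\<And>b. b \<in> B \<Longrightarrow> Q (f b)" for f :: "_ \<Rightarrow> mpoly" and B
    using that by (induction B rule: infinite_finite_induct) (simp_all add: Q_add Q_const[of 0, simplified])
  have prod: "Q (prod f B)" if "\<And>b. b \<in> B \<Longrightarrow> Q (f b)" for f :: "_ \<Rightarrow> mpoly" and B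
    using that by (induction B rule: infinite_finite_induct) (simp_all add: Q_mult Q_const[of 1, simplified])
  have power: "Q (q ^ m)" if "Q q" for q m
    using that by (induction m) (simp_all add: Q_mult Q_const[of 1, simplified])
  have monomial: "Q (PM_single \<alpha> c)" if "PM_keys \<alpha> \<subseteq> A" for \<alpha> c
  proof -
    have "PM_single \<alpha> (1::rat) = (\<Prod>k\<in>PM_keys \<alpha>. X k ^ PM_lookup \<alpha> k)"
      by (subst prod_X_power) (simp_all, metis poly_mapping_sum_single)
    moreover have "Q (\<Prod>k\<in>PM_keys \<alpha>. X k ^ PM_lookup \<alpha> k)"
      using that var by (intro prod power) (auto simp: Q_def intro: vars_in_X)
    ultimately have "Q (PM_single 0 c * PM_single \<alpha> 1)" by (simp add: Q_mult Q_const)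
    then show ?thesis by (simp add: mult_single)
  qed
  have "Q (\<Sum>\<alpha>\<in>PM_keys p. PM_single \<alpha> (PM_lookup p \<alpha>))"
    using p by (intro sum monomial) (auto simp: vars_in_def)
  then show ?thesis by (metis Q_def poly_mapping_sum_single)
qed

lemma swp_vars_in:
  assumes f: "f \<in> vars_in A" and i: "i \<in> A" "Suc i \<in> A"
  shows "swp i f \<in> vars_in A"
  unfolding vars_in_def mem_Collect_eq
proof
  fix \<alpha> assume "\<alpha> \<in> PM_keys (swp i f)"
  then have "swap_exps i \<alpha> \<in> PM_keys f" by (simp add: in_keys_iff lookup_swp)
  then have "PM_keys (swap_exps i \<alpha>) \<subseteq> A" using f by (simp add: vars_in_def)
  then have "tr i ` PM_keys \<alpha> \<subseteq> A" by (simp only: keys_swap_exps)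
  moreover have "k \<in> A" if "tr i k \<in> A" for k
    using that i by (simp add: tr_def split: if_splits)
  ultimately show "PM_keys \<alpha> \<subseteq> A" by blast
qed

section \<open>Divided differences\<close>

lemma X_eq_X_iff: "X i = X j \<longleftrightarrow> i = j"
proof
  assume "X i = X j"
  then have "PM_lookup (X i) (PM_single i 1) = PM_lookup (X j) (PM_single i 1)" by simp
  then have "PM_single i (1::nat) = PM_single j 1" unfolding X_def
    by (simp add: lookup_single when_def split: if_splits)
  then have "PM_lookup (PM_single i (1::nat)) i = PM_lookup (PM_single j 1) i" by simp
  then show "i = j" by (simp add: lookup_single when_def split: if_splits)
qed simp

lemma X_diff_X_Suc_nonzero: "X i - X (i + 1) \<noteq> 0"
  using X_eq_X_iff[of i "i + 1"] by simp

lemma divided_difference_exists: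
  assumes "f \<in> vars_in A" "i \<in> A" "Suc i \<in> A"
  shows "\<exists>g\<in>vars_in A. (X i - X (i + 1)) * g = f - swp i f"
  using assms(1)
proof (induction f rule: vars_in_induct)
  case (add p q)
  then obtain g h where "g \<in> vars_in A" "h \<in> vars_in A"
    "(X i - X (i + 1)) * g = p - swp i p" "(X i - X (i + 1)) * h = q - swp i q"
    by blast
  then show ?case
    by (intro bexI[of _ "g + h"] vars_in_add) (simp_all add: algebra_simps swp_add)
next
  case (mult p q)
  then obtain g h where gh: "g \<in> vars_in A" "h \<in> vars_in A"
    "(X i - X (i + 1)) * g = p - swp i p" "(X i - X (i + 1)) * h = q - swp i q"
    by blast
  \<comment> \<open>the Leibniz rule for divided differences\<close>
  have "(X i - X (i + 1)) * (g * q + swp i p * h)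
      = ((X i - X (i + 1)) * g) * q + swp i p * ((X i - X (i + 1)) * h)"
    by (simp only: algebra_simps)
  also have "\<dots> = p * q - swp i (p * q)"
    unfolding gh(3,4) swp_mult by (simp only: algebra_simps)
  finally show ?case
    using gh mult assms
    by (intro bexI[of _ "g * q + swp i p * h"] vars_in_add vars_in_mult swp_vars_in) auto
next
  case (const c)
  show ?case by (intro bexI[of _ 0]) (simp_all add: swp_single)
next
  case (var k)
  consider "k = i" | "k = Suc i" | "k \<noteq> i" "k \<noteq> Suc i" by blast
  then show ?case
  proof cases
    case 1
    then show ?thesis by (intro bexI[of _ 1]) (simp_all add: swp_X tr_def)
  next
    case 2
    then show ?thesis by (intro bexI[of _ "-1"] vars_in_uminus) (simp_all add: swp_X tr_def)
  next
    case 3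
    then show ?thesis by (intro bexI[of _ 0]) (simp_all add: swp_X tr_def)
  qed
qed

lemma dd_eqI:
  assumes "(X i - X (i + 1)) * g = f - swp i f"
  shows "dd i f = g"
  unfolding dd_def
proof (rule the_equality)
  fix h assume "(X i - X (i + 1)) * h = f - swp i f"
  then have "(X i - X (i + 1)) * h = (X i - X (i + 1)) * g" using assms by simp
  then show "h = g" using X_diff_X_Suc_nonzero by simp
qed (rule assms)

lemma X_diff_mult_dd: "(X i - X (i + 1)) * dd i f = f - swp i f"
proof -
  obtain g where "(X i - X (i + 1)) * g = f - swp i f"
    using divided_difference_exists[of f UNIV i] by (auto simp: vars_in_def)
  then show ?thesis using dd_eqI by simp
qed

lemma dd_vars_in: "f \<in> vars_in A \<Longrightarrow> i \<in> A \<Longrightarrow> Suc i \<in> A \<Longrightarrow> dd i f \<in> vars_in A"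
  using divided_difference_exists[of f A i] dd_eqI by metis

lemma dd_add: "dd i (f + g) = dd i f + dd i g"
  by (rule dd_eqI) (simp only: distrib_left X_diff_mult_dd swp_add, simp add: algebra_simps)

lemma dd_diff: "dd i (f - g) = dd i f - dd i g"
  by (rule dd_eqI) (simp only: right_diff_distrib X_diff_mult_dd swp_diff, simp add: algebra_simps)

lemma dd_mult_sym:
  assumes "swp i g = g"
  shows "dd i (g * f) = g * dd i f"
proof (rule dd_eqI)
  have "(X i - X (i + 1)) * (g * dd i f) = g * ((X i - X (i + 1)) * dd i f)"
    by (simp only: ac_simps)
  then show "(X i - X (i + 1)) * (g * dd i f) = g * f - swp i (g * f)"
    by (simp only: X_diff_mult_dd swp_mult assms right_diff_distrib)
qed

lemma dd_sym: "swp i f = f \<Longrightarrow> dd i f = 0"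
  by (rule dd_eqI) simp

lemma dd_zero [simp]: "dd i 0 = 0"
  by (rule dd_sym) simp

lemma dd_X: "dd i (X i) = 1"
  by (rule dd_eqI) (simp add: swp_X tr_def)

lemma swp_dd: "swp i (dd i f) = dd i f"
proof -
  have "(X i - X (i + 1)) * swp i (dd i f) = - swp i ((X i - X (i + 1)) * dd i f)"
    by (simp add: swp_mult swp_diff swp_X tr_def algebra_simps)
  also have "\<dots> = (X i - X (i + 1)) * dd i f"
    by (simp only: X_diff_mult_dd swp_diff swp_swp, simp)
  finally show ?thesis using X_diff_X_Suc_nonzero by simp
qed

lemma dc_self [simp]: "dc n n f = f"
  by (simp add: dc_def)

lemma dc_Suc: "k < n \<Longrightarrow> dc n k f = dd k (dc n (Suc k) f)"
  by (simp add: dc_def upt_rec)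

lemma dc_diff: "dc n k (f - g) = dc n k f - dc n k g"
proof -
  have "foldr dd L (f - g) = foldr dd L f - foldr dd L g" for L
    by (induction L) (simp_all add: dd_diff)
  then show ?thesis by (simp add: dc_def)
qed

lemma dc_mult_sym:
  assumes "\<And>i. i \<in> {k..<n} \<Longrightarrow> swp i g = g"
  shows "dc n k (g * f) = g * dc n k f"
proof -
  have "foldr dd L (g * f) = g * foldr dd L f" if "set L \<subseteq> {k..<n}" for L
    using that assms by (induction L) (simp_all add: dd_mult_sym)
  then show ?thesis by (simp add: dc_def)
qed

lemma dc_vars_in:
  assumes "1 \<le> k" "f \<in> vars_in {1..n}"
  shows "dc n k f \<in> vars_in {1..n}"
proof -
  have "foldr dd L f \<in> vars_in {1..n}" if "set L \<subseteq> {k..<n}" for L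
    using that assms by (induction L) (auto intro: dd_vars_in)
  then show ?thesis by (simp add: dc_def)
qed

section \<open>Elementary symmetric polynomials and the polynomials \<open>pjr\<close>\<close>

lemma elem_0: "finite A \<Longrightarrow> elem A 0 = 1"
proof -
  assume "finite A"
  then have "{T. T \<subseteq> A \<and> card T = 0} = {{}}" by (auto dest: finite_subset)
  then show ?thesis by (simp add: elem_def)
qed

lemma subsets_card_Suc_insert:
  assumes "finite A" "a \<notin> A"
  shows "{T. T \<subseteq> insert a A \<and> card T = Suc t}
       = {T. T \<subseteq> A \<and> card T = Suc t} \<union> insert a ` {T. T \<subseteq> A \<and> card T = t}"
proof (intro set_eqI iffI)
  fix T assume T: "T \<in> {T. T \<subseteq> insert a A \<and> card T = Suc t}"
  have "finite T" using T assms by (auto intro: finite_subset)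
  then show "T \<in> {T. T \<subseteq> A \<and> card T = Suc t} \<union> insert a ` {T. T \<subseteq> A \<and> card T = t}"
    using T by (cases "a \<in> T") (auto intro!: image_eqI[of T "insert a" "T - {a}"])
next
  fix T assume "T \<in> {T. T \<subseteq> A \<and> card T = Suc t} \<union> insert a ` {T. T \<subseteq> A \<and> card T = t}"
  then consider "T \<subseteq> A" "card T = Suc t" | U where "T = insert a U" "U \<subseteq> A" "card U = t"
    by blast
  then show "T \<in> {T. T \<subseteq> insert a A \<and> card T = Suc t}"
  proof cases
    case 2
    then have "finite U" "a \<notin> U" using assms by (auto simp: finite_subset)
    then show ?thesis using 2 by auto
  qed auto
qed

lemma elem_insert_Suc:
  assumes fin: "finite A" and a: "a \<notin> A"
  shows "elem (insert a A) (Suc t) = elem A (Suc t) + X a * elem A t"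
proof -
  have fin_subsets: "finite {T. T \<subseteq> A \<and> card T = k}" for k
    using fin by (auto intro: finite_subset[of _ "Pow A"])
  have "elem (insert a A) (Suc t)
      = elem A (Suc t) + (\<Sum>T\<in>insert a ` {T. T \<subseteq> A \<and> card T = t}. \<Prod>i\<in>T. X i)"
    unfolding elem_def subsets_card_Suc_insert[OF assms]
    by (rule sum.union_disjoint) (use a fin_subsets in auto)
  also have "(\<Sum>T\<in>insert a ` {T. T \<subseteq> A \<and> card T = t}. \<Prod>i\<in>T. X i)
      = (\<Sum>T\<in>{T. T \<subseteq> A \<and> card T = t}. X a * (\<Prod>i\<in>T. X i))"
  proof -
    have "(\<Prod>i\<in>insert a T. X i) = X a * (\<Prod>i\<in>T. X i)" if "T \<subseteq> A" for T
      using that a fin by (subst prod.insert) (auto simp: finite_subset)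
    moreover have "inj_on (insert a) {T. T \<subseteq> A \<and> card T = t}"
      using a by (auto simp: inj_on_def)
    ultimately show ?thesis by (simp add: sum.reindex)
  qed
  finally show ?thesis by (simp add: elem_def sum_distrib_left)
qed

lemma swp_elem:
  assumes "\<And>k. k \<in> A \<Longrightarrow> tr i k \<in> A"
  shows "swp i (elem A m) = elem A m"
proof -
  have inj: "inj_on (tr i) T" for T
    by (rule inj_on_subset[OF inj_tr]) simp
  have "swp i (elem A m) = (\<Sum>T\<in>{T. T \<subseteq> A \<and> card T = m}. \<Prod>k\<in>tr i ` T. X k)"
    by (simp add: elem_def swp_sum swp_prod swp_X prod.reindex[OF inj])
  also have "\<dots> = elem A m"
    unfolding elem_def
    by (rule sum.reindex_bij_witness[of _ "(`) (tr i)" "(`) (tr i)"])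
      (use assms in \<open>auto simp: image_image card_image[OF inj]\<close>)
  finally show ?thesis .
qed

lemma swp_elem_atLeastAtMost: "1 \<le> i \<Longrightarrow> i < n \<Longrightarrow> swp i (elem {1..n} m) = elem {1..n} m"
  by (rule swp_elem) (auto simp: tr_def)

lemma elem_vars_in: "elem A m \<in> vars_in A"
  unfolding elem_def by (intro vars_in_sum vars_in_prod vars_in_X) auto

lemma dd_elem:
  assumes "1 \<le> k"
  shows "dd k (elem {1..<Suc k} m) = (if m = 0 then 0 else elem {1..<k} (m - 1))"
proof (cases m)
  case 0
  then show ?thesis by (simp add: elem_0 dd_sym)
next
  case (Suc s)
  have sym: "swp k (elem {1..<k} t) = elem {1..<k} t" for t
    by (rule swp_elem) (auto simp: tr_def)
  have "{1..<Suc k} = insert k {1..<k}" using assms by auto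
  then have "elem {1..<Suc k} m = elem {1..<k} (Suc s) + elem {1..<k} s * X k"
    using Suc elem_insert_Suc[of "{1..<k}" k s] by (simp add: ac_simps)
  then show ?thesis
    using Suc by (simp only: dd_add dd_sym[OF sym] dd_mult_sym[OF sym] dd_X) simp
qed

lemma dc_elem:
  assumes "1 \<le> k" "k \<le> n"
  shows "dc n k (elem {1..<n} t) = (if n - k \<le> t then elem {1..<k} (t - (n - k)) else 0)"
  using assms(2,1)
proof (induction k rule: inc_induct)
  case (step k)
  show ?case
  proof (cases "n - Suc k \<le> t")
    case True
    have "dc n k (elem {1..<n} t) = dd k (elem {1..<Suc k} (t - (n - Suc k)))"
      using step True by (simp add: dc_Suc[OF step.hyps(2)])
    also have "\<dots> = (if t - (n - Suc k) = 0 then 0 else elem {1..<k} (t - (n - Suc k) - 1))"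
      by (rule dd_elem[OF step.prems])
    moreover have "t - (n - Suc k) = 0 \<longleftrightarrow> \<not> n - k \<le> t" "t - (n - Suc k) - 1 = t - (n - k)"
      using True step.hyps by linarith+
    ultimately show ?thesis by simp
  next
    case False
    then have "\<not> n - k \<le> t" by linarith
    then show ?thesis using step False by (simp add: dc_Suc[OF step.hyps(2)])
  qed
qed simp

text \<open>Powers of \<open>x\<^sub>n\<close> are eliminated via \<open>x\<^sub>n e\<^sub>t(x\<^sub>1..x\<^sub>n\<^sub>-\<^sub>1) = e\<^sub>t\<^sub>+\<^sub>1(x\<^sub>1..x\<^sub>n) - e\<^sub>t\<^sub>+\<^sub>1(x\<^sub>1..x\<^sub>n\<^sub>-\<^sub>1)\<close>,
  whose fully symmetric term passes through every \<open>\<partial>\<^sub>i\<close>.\<close>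

lemma X_power_Suc_mult_elem:
  assumes "1 \<le> n"
  shows "X n ^ Suc a * elem {1..<n} t
       = elem {1..n} (Suc t) * (X n ^ a * elem {1..<n} 0) - X n ^ a * elem {1..<n} (Suc t)"
proof -
  have "{1..n} = insert n {1..<n}" using assms by auto
  then have "X n * elem {1..<n} t = elem {1..n} (Suc t) - elem {1..<n} (Suc t)"
    by (simp add: elem_insert_Suc)
  then have "X n ^ Suc a * elem {1..<n} t = X n ^ a * (elem {1..n} (Suc t) - elem {1..<n} (Suc t))"
    by (simp flip: mult.assoc)
  then show ?thesis by (simp add: elem_0 algebra_simps)
qed

lemma dc_X_power_mult_elem_Suc:
  assumes "1 \<le> k" "k \<le> n"
  shows "dc n k (X n ^ Suc a * elem {1..<n} t)
       = elem {1..n} (Suc t) * dc n k (X n ^ a * elem {1..<n} 0) - dc n k (X n ^ a * elem {1..<n} (Suc t))"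
proof -
  have "swp i (elem {1..n} (Suc t)) = elem {1..n} (Suc t)" if "i \<in> {k..<n}" for i
    using that assms by (intro swp_elem_atLeastAtMost) auto
  then show ?thesis
    using assms X_power_Suc_mult_elem[of n a t] by (simp only: dc_diff dc_mult_sym)
qed

lemma dc_X_power_mult_elem:
  assumes "1 \<le> k" "k \<le> n" "a \<le> n - k"
  shows "dc n k (X n ^ a * elem {1..<n} t)
       = (-1) ^ a * (if n - k \<le> a + t then elem {1..<k} (a + t - (n - k)) else 0)"
  using assms(3)
proof (induction a arbitrary: t)
  case 0
  then show ?case using dc_elem[OF assms(1,2)] by simp
next
  case (Suc a)
  then have "dc n k (X n ^ Suc a * elem {1..<n} t)
      = - dc n k (X n ^ a * elem {1..<n} (Suc t))"
    using assms Suc by (subst dc_X_power_mult_elem_Suc) simp_all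
  then show ?case using Suc by simp
qed

lemma dc_pjr:
  assumes "j \<in> {1..n}" "r \<le> n - j"
  shows "dc n j (pjr n j r) = 1"
proof -
  have "dc n j (pjr n j r) = (-1) ^ r * dc n j (X n ^ r * elem {1..<n} (n - j - r))"
    unfolding pjr_def mult.assoc by (rule dc_mult_sym) simp
  also have "\<dots> = (-1) ^ r * ((-1) ^ r * elem {1..<j} 0)"
    using assms by (subst dc_X_power_mult_elem) auto
  also have "\<dots> = 1"
    by (simp add: elem_0 flip: power_add mult_2)
  finally show ?thesis .
qed

definition sym_except :: "nat \<Rightarrow> nat \<Rightarrow> mpoly \<Rightarrow> bool" where
  "sym_except n i0 g \<longleftrightarrow> (\<forall>i\<in>{1..<n} - {i0}. swp i g = g)"

lemma sym_except_diff: "sym_except n i0 f \<Longrightarrow> sym_except n i0 g \<Longrightarrow> sym_except n i0 (f - g)"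
  by (simp add: sym_except_def swp_diff)

lemma sym_except_mult: "sym_except n i0 f \<Longrightarrow> sym_except n i0 g \<Longrightarrow> sym_except n i0 (f * g)"
  by (simp add: sym_except_def swp_mult)

lemma sym_except_dc_X_power_mult_elem:
  assumes "1 \<le> k" "k \<le> n"
  shows "sym_except n (k - 1) (dc n k (X n ^ a * elem {1..<n} t))"
proof (induction a arbitrary: t)
  case 0
  have "sym_except n (k - 1) (elem {1..<k} s)" for s
    unfolding sym_except_def by (auto simp: tr_def split: if_splits intro!: swp_elem)
  then show ?case using dc_elem[OF assms] by (simp add: sym_except_def)
next
  case (Suc a)
  have "sym_except n (k - 1) (elem {1..n} s)" for s
    unfolding sym_except_def by (auto simp: tr_def split: if_splits intro!: swp_elem)
  then show ?case
    unfolding dc_X_power_mult_elem_Suc[OF assms] by (intro sym_except_diff sym_except_mult Suc.IH)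
qed

lemma sym_except_dc_pjr:
  assumes "1 \<le> k" "k \<le> n"
  shows "sym_except n (k - 1) (dc n k (pjr n j r))"
proof -
  have "dc n k (pjr n j r) = (-1) ^ r * dc n k (X n ^ r * elem {1..<n} (n - j - r))"
    unfolding pjr_def mult.assoc by (rule dc_mult_sym) simp
  then show ?thesis
    using sym_except_dc_X_power_mult_elem[OF assms] by (simp add: sym_except_def swp_mult)
qed

lemma pjr_vars_in: "1 \<le> n \<Longrightarrow> pjr n j r \<in> vars_in {1..n}"
  unfolding pjr_def
  by (intro vars_in_mult vars_in_neg_one_power vars_in_power vars_in_X vars_in_mono[OF elem_vars_in]) auto

lemma pjr_Pn1:
  assumes "1 \<le> n"
  shows "pjr n j r \<in> Pn1 n"
proof -
  have "swp i (pjr n j r) = pjr n j r" if "i \<in> {1..<n - 1}" for i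
  proof -
    have "swp i (X n) = X n" "swp i (elem {1..<n} (n - j - r)) = elem {1..<n} (n - j - r)"
      using that by (auto simp: swp_X tr_def intro!: swp_elem)
    then show ?thesis by (simp add: pjr_def swp_mult swp_power)
  qed
  then show ?thesis using pjr_vars_in[OF assms] by (simp add: Pn1_def Pn_eq_vars_in)
qed

lemma hcompl_singleton: "hcompl {n} m = X n ^ m"
proof -
  have "{\<alpha>. PM_keys \<alpha> \<subseteq> {n} \<and> (\<Sum>i\<in>{n}. PM_lookup \<alpha> i) = m} = {PM_single n m}"
  proof (intro set_eqI iffI)
    fix \<alpha> assume "\<alpha> \<in> {\<alpha>. PM_keys \<alpha> \<subseteq> {n} \<and> (\<Sum>i\<in>{n}. PM_lookup \<alpha> i) = m}"
    then have "PM_keys \<alpha> \<subseteq> {n}" "PM_lookup \<alpha> n = m" by auto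
    then have "\<alpha> = PM_single n m"
      by (intro poly_mapping_eqI) (auto simp: lookup_single in_keys_iff when_def)
    then show "\<alpha> \<in> {PM_single n m}" by simp
  qed simp
  then show ?thesis by (simp add: hcompl_def monom_def X_power)
qed

section \<open>The exterior algebra\<close>

definition ext_zero :: ext where "ext_zero = (\<lambda>S. 0)"

definition ext_finite :: "ext \<Rightarrow> bool" where "ext_finite x \<longleftrightarrow> (\<forall>S. x S \<noteq> 0 \<longrightarrow> finite S)"

definition inversions :: "nat set \<Rightarrow> nat set \<Rightarrow> (nat \<times> nat) set" where
  "inversions T U = {(t, u). t \<in> T \<and> u \<in> U \<and> u < t}"

lemma esgn_conv_inversions: "esgn T U = (-1) ^ card (inversions T U)"
  by (simp add: esgn_def inversions_def)

lemma inversions_finite: "finite T \<Longrightarrow> finite U \<Longrightarrow> finite (inversions T U)"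
  unfolding inversions_def by (rule finite_subset[of _ "T \<times> U"]) auto

lemma esgn_Un_right:
  assumes "finite T" "finite U" "finite V" "U \<inter> V = {}"
  shows "esgn T (U \<union> V) = esgn T U * esgn T V"
proof -
  have "inversions T (U \<union> V) = inversions T U \<union> inversions T V" "inversions T U \<inter> inversions T V = {}"
    using assms(4) by (auto simp: inversions_def)
  then have "card (inversions T (U \<union> V)) = card (inversions T U) + card (inversions T V)"
    using assms by (simp add: card_Un_disjoint inversions_finite)
  then show ?thesis by (simp add: esgn_conv_inversions power_add)
qed

lemma esgn_Un_left:
  assumes "finite T" "finite U" "finite V" "T \<inter> U = {}"
  shows "esgn (T \<union> U) V = esgn T V * esgn U V"
proof -
  have "inversions (T \<union> U) V = inversions T V \<union> inversions U V" "inversions T V \<inter> inversions U V = {}"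
    using assms(4) by (auto simp: inversions_def)
  then have "card (inversions (T \<union> U) V) = card (inversions T V) + card (inversions U V)"
    using assms by (simp add: card_Un_disjoint inversions_finite)
  then show ?thesis by (simp add: esgn_conv_inversions power_add)
qed

lemma esgn_empty_left[simp]: "esgn {} U = 1"
  by (simp add: esgn_def)

lemma esgn_empty_right[simp]: "esgn T {} = 1"
  by (simp add: esgn_def)

lemma ext_mul_infinite: "infinite S \<Longrightarrow> ext_mul a b S = 0"
  by (simp add: ext_mul_def)

lemma ext_finite_mul[simp]: "ext_finite (ext_mul a b)"
  unfolding ext_finite_def using ext_mul_infinite by blast

lemma ext_finite_one[simp]: "ext_finite ext_one"
  by (simp add: ext_finite_def ext_one_def)

lemma sum_eq_single:
  assumes "finite A" "a \<in> A" "\<And>b. b \<in> A \<Longrightarrow> b \<noteq> a \<Longrightarrow> g b = 0"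
  shows "sum g A = g a"
proof -
  have "sum g A = g a + sum g (A - {a})" using assms(1,2) by (rule sum.remove)
  also have "sum g (A - {a}) = 0" using assms(3) by (intro sum.neutral) auto
  finally show ?thesis by simp
qed

lemma ext_mul_scal_left: "ext_finite x \<Longrightarrow> ext_mul (ext_scal f) x = (\<lambda>S. f * x S)"
proof (rule ext)
  fix S assume x: "ext_finite x"
  show "ext_mul (ext_scal f) x S = f * x S"
  proof (cases "finite S")
    case True
    then show ?thesis unfolding ext_mul_def
      by (subst sum_eq_single[of _ "{}"]) (auto simp: ext_scal_def)
  next
    case False
    then show ?thesis using x by (simp add: ext_mul_infinite ext_finite_def) blast
  qed
qed

lemma ext_mul_scal_right: "ext_finite x \<Longrightarrow> ext_mul x (ext_scal f) = (\<lambda>S. x S * f)"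
proof (rule ext)
  fix S assume x: "ext_finite x"
  show "ext_mul x (ext_scal f) S = x S * f"
  proof (cases "finite S")
    case True
    then show ?thesis unfolding ext_mul_def
      by (subst sum_eq_single[of _ S]) (auto simp: ext_scal_def)
  next
    case False
    then show ?thesis using x by (simp add: ext_mul_infinite ext_finite_def) blast
  qed
qed

lemma ext_one_scal: "ext_one = ext_scal 1"
  by (simp add: ext_one_def ext_scal_def)

lemma ext_mul_one_left[simp]: "ext_finite x \<Longrightarrow> ext_mul ext_one x = x"
  by (simp add: ext_one_scal ext_mul_scal_left)

lemma ext_mul_one_right[simp]: "ext_finite x \<Longrightarrow> ext_mul x ext_one = x"
  by (simp add: ext_one_scal ext_mul_scal_right)

lemma ext_mul_assoc: "ext_mul (ext_mul a b) c = ext_mul a (ext_mul b c)"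
proof (rule ext)
  fix S
  show "ext_mul (ext_mul a b) c S = ext_mul a (ext_mul b c) S"
  proof (cases "finite S")
    case False
    then show ?thesis by (simp add: ext_mul_infinite)
  next
    case fin: True
    define h where "h T W = esgn T (W - T) * esgn W (S - W) * a T * b (W - T) * c (S - W)" for T W
    have "ext_mul (ext_mul a b) c S = (\<Sum>W\<in>Pow S. \<Sum>T\<in>Pow W. h T W)"
      unfolding ext_mul_def h_def by (simp add: sum_distrib_left sum_distrib_right ac_simps)
    also have "\<dots> = (\<Sum>W\<in>Pow S. \<Sum>T\<in>{T\<in>Pow S. T \<subseteq> W}. h T W)"
      by (rule sum.cong[OF refl], rule sum.cong) auto
    also have "\<dots> = (\<Sum>T\<in>Pow S. \<Sum>W\<in>{W\<in>Pow S. T \<subseteq> W}. h T W)"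
      using sum.swap_restrict[of "Pow S" "Pow S" "\<lambda>W T. h T W" "\<lambda>W T. T \<subseteq> W"] fin by simp
    also have "\<dots> = (\<Sum>T\<in>Pow S. esgn T (S - T) * a T * ext_mul b c (S - T))"
    proof (rule sum.cong[OF refl])
      fix T assume T: "T \<in> Pow S"
      have "(\<Sum>W\<in>{W\<in>Pow S. T \<subseteq> W}. h T W) = (\<Sum>U\<in>Pow (S - T). h T (T \<union> U))"
      proof (rule sum.reindex_bij_witness[of _ "\<lambda>U. T \<union> U" "\<lambda>W. W - T"])
      qed (use T in \<open>auto simp: Un_absorb1\<close>)
      also have "\<dots> = (\<Sum>U\<in>Pow (S - T). esgn T (S - T) * a T * (esgn U (S - T - U) * b U * c (S - T - U)))"
      proof (rule sum.cong[OF refl])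
        fix U assume U: "U \<in> Pow (S - T)"
        have fT: "finite T" "finite U" "finite (S - T - U)" using T U fin by (auto intro: finite_subset)
        have diff_eqs: "T \<union> U - T = U" "S - (T \<union> U) = S - T - U" using U by auto
        have s1: "esgn (T \<union> U) (S - T - U) = esgn T (S - T - U) * esgn U (S - T - U)"
          using fT U by (intro esgn_Un_left) auto
        have s2: "esgn T (S - T) = esgn T U * esgn T (S - T - U)"
        proof -
          have "S - T = U \<union> (S - T - U)" using U by auto
          then show ?thesis using fT by (metis Diff_disjoint esgn_Un_right)
        qed
        show "h T (T \<union> U) = esgn T (S - T) * a T * (esgn U (S - T - U) * b U * c (S - T - U))"
          unfolding h_def diff_eqs s1 s2 by (simp add: ac_simps)
      qed
      also have "\<dots> = esgn T (S - T) * a T * ext_mul b c (S - T)"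
        unfolding ext_mul_def by (simp add: sum_distrib_left)
      finally show "(\<Sum>W\<in>{W\<in>Pow S. T \<subseteq> W}. h T W) = esgn T (S - T) * a T * ext_mul b c (S - T)" .
    qed
    also have "\<dots> = ext_mul a (ext_mul b c) S" by (simp only: ext_mul_def[of a])
    finally show ?thesis .
  qed
qed

lemma ext_mul_sum_left: "ext_mul (\<lambda>S. \<Sum>i\<in>I. f i S) y = (\<lambda>S. \<Sum>i\<in>I. ext_mul (f i) y S)"
  unfolding ext_mul_def by (rule ext) (simp add: sum_distrib_left sum_distrib_right, rule sum.swap)

lemma ext_mul_sum_right: "ext_mul x (\<lambda>S. \<Sum>i\<in>I. f i S) = (\<lambda>S. \<Sum>i\<in>I. ext_mul x (f i) S)"
  unfolding ext_mul_def by (rule ext) (simp add: sum_distrib_left sum_distrib_right, rule sum.swap)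

lemma ext_mul_cmul_left: "ext_mul (\<lambda>S. c * x S) y = (\<lambda>S. c * ext_mul x y S)"
  unfolding ext_mul_def by (rule ext) (simp add: sum_distrib_left ac_simps)

lemma ext_mul_cmul_right: "ext_mul x (\<lambda>S. c * y S) = (\<lambda>S. c * ext_mul x y S)"
  unfolding ext_mul_def by (rule ext) (simp add: sum_distrib_left ac_simps)

lemma ext_mul_neg_left: "ext_mul (\<lambda>S. - x S) y = (\<lambda>S. - ext_mul x y S)"
  using ext_mul_cmul_left[of "-1" x y] by simp

lemma ext_mul_zero_left[simp]: "ext_mul ext_zero y = ext_zero"
  unfolding ext_mul_def ext_zero_def by simp

lemma ext_mul_zero_right[simp]: "ext_mul x ext_zero = ext_zero"
  unfolding ext_mul_def ext_zero_def by simp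

definition ext_linear :: "ext \<Rightarrow> bool" where
  "ext_linear v \<longleftrightarrow> (\<forall>S. v S \<noteq> 0 \<longrightarrow> (\<exists>k. S = {k}))"

lemma ext_linear_imp_ext_finite: "ext_linear v \<Longrightarrow> ext_finite v"
  unfolding ext_linear_def ext_finite_def by fastforce

lemma inversions_single: "inversions {a} {b} = (if b < a then {(a, b)} else {})"
  by (auto simp: inversions_def)

lemma esgn_single: "esgn {a} {b} = (if b < a then -1 else 1)"
  by (simp add: esgn_conv_inversions inversions_single)

lemma ext_mul_anticomm:
  assumes v: "ext_linear v" and w: "ext_linear w"
  shows "ext_mul v w S = - ext_mul w v S"
proof (cases "finite S")
  case False
  then show ?thesis by (simp add: ext_mul_infinite)
next
  case fin: True
  have "ext_mul w v S = (\<Sum>T\<in>Pow S. esgn (S - T) T * w (S - T) * v T)"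
    unfolding ext_mul_def
  proof (rule sum.reindex_bij_witness[of _ "\<lambda>X. S - X" "\<lambda>X. S - X"])
    fix U assume "U \<in> Pow S"
    then have U: "S - (S - U) = U" by blast
    show "S - (S - U) = U" by (rule U)
    show "S - U \<in> Pow S" by blast
    show "esgn (S - (S - U)) (S - U) * w (S - (S - U)) * v (S - U) = esgn U (S - U) * w U * v (S - U)"
      by (simp only: U)
  qed blast+
  also have "\<dots> = - (\<Sum>T\<in>Pow S. esgn T (S - T) * v T * w (S - T))"
    unfolding sum_negf[symmetric]
  proof (rule sum.cong[OF refl])
    fix T assume T: "T \<in> Pow S"
    show "esgn (S - T) T * w (S - T) * v T = - (esgn T (S - T) * v T * w (S - T))"
    proof (cases "v T = 0 \<or> w (S - T) = 0")
      case True
      then show ?thesis by auto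
    next
      case False
      then have "v T \<noteq> 0" "w (S - T) \<noteq> 0" by auto
      then obtain a b where ab: "T = {a}" "S - T = {b}"
        using v w unfolding ext_linear_def by metis
      then have "a \<noteq> b" by blast
      have esgn_ab: "esgn (S - T) T = esgn {b} {a}" "esgn T (S - T) = esgn {a} {b}" by (simp_all only: ab(2), simp_all only: ab(1))
      have "esgn (S - T) T = - esgn T (S - T)" unfolding esgn_ab using \<open>a \<noteq> b\<close> by (simp add: esgn_single)
      then show ?thesis by simp
    qed
  qed
  finally show ?thesis unfolding ext_mul_def by simp
qed

lemma ext_mul_square:
  assumes v: "ext_linear v"
  shows "ext_mul v v = ext_zero"
proof (rule ext)
  fix S
  have "ext_mul v v S = - ext_mul v v S" by (rule ext_mul_anticomm[OF v v])
  then have "2 * ext_mul v v S = 0" by (simp add: mult_2)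
  then show "ext_mul v v S = ext_zero S" by (simp add: ext_zero_def)
qed

definition ext_wedge :: "(nat \<Rightarrow> ext) \<Rightarrow> nat set \<Rightarrow> ext" where
  "ext_wedge w S = ext_prodlist (map w (sorted_list_of_set S))"

lemma ext_wedge_empty[simp]: "ext_wedge w {} = ext_one"
  by (simp add: ext_wedge_def ext_prodlist_def)

lemma ext_wedge_insert_min:
  assumes "finite S" "\<forall>s\<in>S. m < s"
  shows "ext_wedge w (insert m S) = ext_mul (w m) (ext_wedge w S)"
proof -
  have "Min (insert m S) = m" by (rule Min_eqI) (use assms in \<open>auto simp: less_imp_le\<close>)
  moreover have "insert m S - {m} = S" using assms by auto
  ultimately have "sorted_list_of_set (insert m S) = m # sorted_list_of_set S"
    using sorted_list_of_set_nonempty[of "insert m S"] assms by simp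
  then show ?thesis by (simp add: ext_wedge_def ext_prodlist_def)
qed

lemma ext_finite_ext_wedge: "ext_finite (ext_wedge w S)"
  by (cases "sorted_list_of_set S") (simp_all add: ext_wedge_def ext_prodlist_def)

lemma ext_wedge_single: "ext_linear (w a) \<Longrightarrow> ext_wedge w {a} = w a"
  using ext_wedge_insert_min[of "{}" a w] by (simp add: ext_linear_imp_ext_finite)

lemma ext_mul_ext_wedge:
  assumes w: "\<And>k. ext_linear (w k)" and fin: "finite S"
  shows "ext_mul (w a) (ext_wedge w S)
       = (if a \<in> S then ext_zero else (\<lambda>U. (-1) ^ card {s\<in>S. s < a} * ext_wedge w (insert a S) U))"
  using fin
proof (induction S rule: finite_linorder_min_induct)
  case empty
  then show ?case by (simp add: w ext_linear_imp_ext_finite ext_wedge_single)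
next
  case (insert m S)
  have mS: "m \<notin> S" using insert by auto
  have wedge_insert: "ext_wedge w (insert m S) = ext_mul (w m) (ext_wedge w S)" by (rule ext_wedge_insert_min) (use insert in auto)
  consider "a < m" | "a = m" | "m < a" by linarith
  then show ?case
  proof cases
    case 1
    then have ni: "a \<notin> insert m S" and "{s\<in>insert m S. s < a} = {}" using insert by auto
    then have c0: "card {s\<in>insert m S. s < a} = 0" by simp
    have "ext_wedge w (insert a (insert m S)) = ext_mul (w a) (ext_wedge w (insert m S))"
      by (rule ext_wedge_insert_min) (use insert 1 in auto)
    then show ?thesis unfolding if_not_P[OF ni] c0 by simp
  next
    case 2
    have "ext_mul (w a) (ext_wedge w (insert m S)) = ext_mul (ext_mul (w a) (w a)) (ext_wedge w S)"
      unfolding wedge_insert 2 by (simp add: ext_mul_assoc)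
    then show ?thesis using 2 by (simp add: ext_mul_square w)
  next
    case 3
    have "ext_mul (w a) (ext_wedge w (insert m S)) = ext_mul (ext_mul (w a) (w m)) (ext_wedge w S)"
      unfolding wedge_insert by (simp add: ext_mul_assoc)
    also have "ext_mul (w a) (w m) = (\<lambda>U. - ext_mul (w m) (w a) U)"
      by (rule ext) (rule ext_mul_anticomm[OF w w])
    also have "ext_mul (\<lambda>U. - ext_mul (w m) (w a) U) (ext_wedge w S) = (\<lambda>U. - ext_mul (w m) (ext_mul (w a) (ext_wedge w S)) U)"
      by (simp add: ext_mul_neg_left ext_mul_assoc)
    finally have eq: "ext_mul (w a) (ext_wedge w (insert m S)) = (\<lambda>U. - ext_mul (w m) (ext_mul (w a) (ext_wedge w S)) U)" .
    show ?thesis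
    proof (cases "a \<in> S")
      case True
      then show ?thesis unfolding eq insert.IH if_P[OF True] ext_mul_zero_right by (simp add: ext_zero_def)
    next
      case False
      have c: "card {s\<in>insert m S. s < a} = Suc (card {s\<in>S. s < a})"
      proof -
        have "{s\<in>insert m S. s < a} = insert m {s\<in>S. s < a}" using 3 by auto
        then show ?thesis using mS insert by simp
      qed
      have wedge_m: "ext_mul (w m) (ext_wedge w (insert a S)) = ext_wedge w (insert a (insert m S))"
        using ext_wedge_insert_min[of "insert a S" m w] insert 3 by (simp add: insert_commute)
      have ni: "a \<notin> insert m S" using False 3 by auto
      show ?thesis unfolding if_not_P[OF ni] c eq insert.IH if_not_P[OF False] ext_mul_cmul_right
        by (simp add: wedge_m)
    qed
  qed
qed

lemma inversions_insert_left: "m \<notin> T \<Longrightarrow> inversions (insert m T) U = inversions T U \<union> (\<lambda>u. (m, u)) ` {u\<in>U. u < m}"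
  by (auto simp: inversions_def)

lemma esgn_insert_left:
  assumes "finite T" "finite U" "m \<notin> T"
  shows "esgn (insert m T) U = esgn T U * (-1) ^ card {u\<in>U. u < m}"
proof -
  have d: "inversions T U \<inter> (\<lambda>u. (m, u)) ` {u\<in>U. u < m} = {}" using assms(3) by (auto simp: inversions_def)
  have "card (inversions (insert m T) U) = card (inversions T U) + card {u\<in>U. u < m}"
    unfolding inversions_insert_left[OF assms(3)]
    using assms d by (subst card_Un_disjoint) (auto simp: inversions_finite card_image inj_on_def)
  then show ?thesis by (simp add: esgn_conv_inversions power_add)
qed

lemma ext_wedge_mult:
  assumes w: "\<And>k. ext_linear (w k)" and fT: "finite T" and fU: "finite U"
  shows "ext_mul (ext_wedge w T) (ext_wedge w U)
       = (if T \<inter> U = {} then (\<lambda>S. esgn T U * ext_wedge w (T \<union> U) S) else ext_zero)"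
  using fT
proof (induction T rule: finite_linorder_min_induct)
  case empty
  then show ?case by (simp add: ext_finite_ext_wedge)
next
  case (insert m T)
  have mT: "m \<notin> T" using insert by auto
  have wedge_insert: "ext_wedge w (insert m T) = ext_mul (w m) (ext_wedge w T)" by (rule ext_wedge_insert_min) (use insert in auto)
  have eq: "ext_mul (ext_wedge w (insert m T)) (ext_wedge w U) = ext_mul (w m) (ext_mul (ext_wedge w T) (ext_wedge w U))"
    unfolding wedge_insert by (rule ext_mul_assoc)
  show ?case
  proof (cases "T \<inter> U = {}")
    case False
    then show ?thesis unfolding eq insert.IH by auto
  next
    case True
    have prod: "ext_mul (ext_wedge w (insert m T)) (ext_wedge w U)
        = (\<lambda>S. esgn T U * ext_mul (w m) (ext_wedge w (T \<union> U)) S)"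
      unfolding eq insert.IH using True by (simp add: ext_mul_cmul_right)
    have m_wedge: "ext_mul (w m) (ext_wedge w (T \<union> U)) = (if m \<in> T \<union> U then ext_zero
        else (\<lambda>V. (-1) ^ card {s\<in>T \<union> U. s < m} * ext_wedge w (insert m (T \<union> U)) V))"
      using ext_mul_ext_wedge[of w "T \<union> U" m, OF w finite_UnI[OF insert(1) fU]] by simp
    show ?thesis
    proof (cases "m \<in> U")
      case True
      then show ?thesis unfolding prod m_wedge by (auto simp: ext_zero_def)
    next
      case False
      have c: "{s\<in>T \<union> U. s < m} = {u\<in>U. u < m}" using insert by auto
      have "esgn (insert m T) U = esgn T U * (-1) ^ card {u\<in>U. u < m}"
        by (rule esgn_insert_left) (use insert fU in auto)
      then show ?thesis unfolding prod m_wedge using False mT True c by (auto simp: ac_simps)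
    qed
  qed
qed

definition ext_subst :: "(nat \<Rightarrow> ext) \<Rightarrow> (mpoly \<Rightarrow> mpoly) \<Rightarrow> nat \<Rightarrow> ext \<Rightarrow> ext" where
  "ext_subst w \<phi> n f = ext_sum (\<lambda>S. ext_mul (ext_scal (\<phi> (f S))) (ext_wedge w S)) (Pow {1..n})"

lemma act_eq_ext_subst: "act n i = ext_subst (act_gen i) (swp i) n"
  by (rule ext) (simp add: act_def ext_subst_def ext_wedge_def)

lemma Phi_eq_ext_subst: "Phi n r = ext_subst (\<lambda>j. omr n j (r j)) (\<lambda>x. x) n"
  by (rule ext) (simp add: Phi_def ext_subst_def ext_wedge_def)

lemma ext_subst_apply: "ext_subst w \<phi> n f U = (\<Sum>S\<in>Pow {1..n}. \<phi> (f S) * ext_wedge w S U)"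
  by (simp add: ext_subst_def ext_sum_def ext_mul_scal_left ext_finite_ext_wedge)

lemma mpoly_hom_esgn: "mpoly_hom \<phi> \<Longrightarrow> \<phi> (esgn T U) = esgn T U"
  by (simp add: esgn_def mpoly_hom_neg_one_power)

definition ext_supp :: "nat \<Rightarrow> ext \<Rightarrow> bool" where
  "ext_supp n x \<longleftrightarrow> (\<forall>S. x S \<noteq> 0 \<longrightarrow> S \<subseteq> {1..n})"

lemma ext_mul_apply: "ext_mul a b S = (\<Sum>T\<in>Pow S. esgn T (S - T) * a T * b (S - T))"
  by (simp add: ext_mul_def)

lemma ext_subst_ext_mul_apply:
  assumes \<phi>: "mpoly_hom \<phi>"
  shows "ext_subst w \<phi> n (ext_mul f g) U = (\<Sum>T\<in>Pow {1..n}. \<Sum>R\<in>{R\<in>Pow {1..n}. T \<inter> R = {}}.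
           esgn T R * \<phi> (f T) * \<phi> (g R) * ext_wedge w (T \<union> R) U)"
proof -
  define P where "P = Pow {1..n}"
  define h where "h S T = esgn T (S - T) * \<phi> (f T) * \<phi> (g (S - T)) * ext_wedge w S U" for S T
  have "ext_subst w \<phi> n (ext_mul f g) U = (\<Sum>S\<in>P. \<Sum>T\<in>Pow S. h S T)"
    unfolding ext_subst_apply P_def ext_mul_apply h_def
    by (simp add: mpoly_hom_sum[OF \<phi>] mpoly_hom_mult[OF \<phi>] mpoly_hom_esgn[OF \<phi>] sum_distrib_right)
  also have "\<dots> = (\<Sum>S\<in>P. \<Sum>T\<in>{T\<in>P. T \<subseteq> S}. h S T)"
    by (intro sum.cong) (auto simp: P_def)
  also have "\<dots> = (\<Sum>T\<in>P. \<Sum>S\<in>{S\<in>P. T \<subseteq> S}. h S T)"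
    by (rule sum.swap_restrict) (simp_all add: P_def)
  also have "\<dots> = (\<Sum>T\<in>P. \<Sum>R\<in>{R\<in>P. T \<inter> R = {}}. h (T \<union> R) T)"
  proof (rule sum.cong[OF refl])
    fix T assume "T \<in> P"
    then show "(\<Sum>S\<in>{S\<in>P. T \<subseteq> S}. h S T) = (\<Sum>R\<in>{R\<in>P. T \<inter> R = {}}. h (T \<union> R) T)"
      by (intro sum.reindex_bij_witness[of _ "\<lambda>R. T \<union> R" "\<lambda>S. S - T"]) (auto simp: P_def Un_absorb1)
  qed
  also have "\<dots> = (\<Sum>T\<in>P. \<Sum>R\<in>{R\<in>P. T \<inter> R = {}}. esgn T R * \<phi> (f T) * \<phi> (g R) * ext_wedge w (T \<union> R) U)"
    by (intro sum.cong refl) (auto simp: h_def Un_Diff Diff_triv Int_commute)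
  finally show ?thesis by (simp add: P_def)
qed

lemma ext_mul_ext_subst_apply:
  "ext_mul (ext_subst w \<phi> n f) (ext_subst w \<phi> n g) U
     = (\<Sum>T\<in>Pow {1..n}. \<Sum>R\<in>Pow {1..n}. \<phi> (f T) * \<phi> (g R) * ext_mul (ext_wedge w T) (ext_wedge w R) U)"
  unfolding ext_subst_apply[abs_def]
  by (simp add: ext_mul_sum_left ext_mul_sum_right ext_mul_cmul_left ext_mul_cmul_right
      sum_distrib_left ac_simps)

lemma ext_subst_mult:
  assumes \<phi>: "mpoly_hom \<phi>" and w: "\<And>k. ext_linear (w k)"
  shows "ext_subst w \<phi> n (ext_mul f g) = ext_mul (ext_subst w \<phi> n f) (ext_subst w \<phi> n g)"
proof
  fix U
  define P where "P = Pow {1..n}"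
  have "ext_mul (ext_subst w \<phi> n f) (ext_subst w \<phi> n g) U
      = (\<Sum>T\<in>P. \<Sum>R\<in>P. if T \<inter> R = {} then esgn T R * \<phi> (f T) * \<phi> (g R) * ext_wedge w (T \<union> R) U else 0)"
    unfolding ext_mul_ext_subst_apply P_def
    by (intro sum.cong refl) (auto simp: ext_wedge_mult[OF w] ext_zero_def finite_subset)
  also have "\<dots> = ext_subst w \<phi> n (ext_mul f g) U"
    unfolding ext_subst_ext_mul_apply[OF \<phi>] P_def
    by (rule sum.cong[OF refl], rule sum.inter_filter[symmetric]) simp
  finally show "ext_subst w \<phi> n (ext_mul f g) U = ext_mul (ext_subst w \<phi> n f) (ext_subst w \<phi> n g) U" ..
qed

lemma ext_subst_add: "mpoly_hom \<phi> \<Longrightarrow> ext_subst w \<phi> n (\<lambda>S. f S + g S) = (\<lambda>U. ext_subst w \<phi> n f U + ext_subst w \<phi> n g U)"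
  by (rule ext) (simp add: ext_subst_apply mpoly_hom_add distrib_right sum.distrib)

lemma ext_subst_diff: "mpoly_hom \<phi> \<Longrightarrow> ext_subst w \<phi> n (\<lambda>S. f S - g S) = (\<lambda>U. ext_subst w \<phi> n f U - ext_subst w \<phi> n g U)"
  by (rule ext) (simp add: ext_subst_apply mpoly_hom_diff left_diff_distrib sum_subtractf)

lemma ext_subst_sum: "mpoly_hom \<phi> \<Longrightarrow> ext_subst w \<phi> n (\<lambda>S. \<Sum>a\<in>A. g a S) = (\<lambda>U. \<Sum>a\<in>A. ext_subst w \<phi> n (g a) U)"
  by (rule ext) (simp add: ext_subst_apply mpoly_hom_sum sum_distrib_right, rule sum.swap)

lemma ext_subst_cmul: "mpoly_hom \<phi> \<Longrightarrow> ext_subst w \<phi> n (\<lambda>S. c * f S) = (\<lambda>U. \<phi> c * ext_subst w \<phi> n f U)"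
  by (rule ext) (simp add: ext_subst_apply mpoly_hom_mult sum_distrib_left ac_simps)

lemma ext_subst_one: "mpoly_hom \<phi> \<Longrightarrow> ext_subst w \<phi> n ext_one = ext_one"
proof (rule ext)
  fix U assume \<phi>: "mpoly_hom \<phi>"
  have "ext_subst w \<phi> n ext_one U = \<phi> (ext_one {}) * ext_wedge w {} U"
    unfolding ext_subst_apply
    by (rule sum_eq_single) (auto simp: ext_one_def mpoly_hom_zero[OF \<phi>])
  then show "ext_subst w \<phi> n ext_one U = ext_one U" by (simp add: ext_one_def mpoly_hom_one[OF \<phi>])
qed

lemma ext_supp_mul: "ext_supp n a \<Longrightarrow> ext_supp n b \<Longrightarrow> ext_supp n (ext_mul a b)"
  unfolding ext_supp_def
proof (intro allI impI)
  fix S assume a: "\<forall>S. a S \<noteq> 0 \<longrightarrow> S \<subseteq> {1..n}" and b: "\<forall>S. b S \<noteq> 0 \<longrightarrow> S \<subseteq> {1..n}"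
    and S: "ext_mul a b S \<noteq> 0"
  obtain T where "T \<in> Pow S" "esgn T (S - T) * a T * b (S - T) \<noteq> 0"
    using S[unfolded ext_mul_apply] by (rule sum.not_neutral_contains_not_neutral)
  then have "T \<subseteq> S" "a T \<noteq> 0" "b (S - T) \<noteq> 0" by auto
  then show "S \<subseteq> {1..n}" using a b by blast
qed

lemma ext_supp_one: "ext_supp n ext_one"
  by (simp add: ext_supp_def ext_one_def)

lemma ext_supp_ext_wedge: "finite S \<Longrightarrow> (\<forall>k\<in>S. ext_supp n (w k)) \<Longrightarrow> ext_supp n (ext_wedge w S)"
proof (induction S rule: finite_linorder_min_induct)
  case empty
  then show ?case by (simp add: ext_supp_one)
next
  case (insert m S)
  then show ?case by (subst ext_wedge_insert_min) (auto intro: ext_supp_mul)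
qed

lemma ext_supp_ext_subst: "(\<forall>k\<in>{1..n}. ext_supp n (w k)) \<Longrightarrow> ext_supp n (ext_subst w \<phi> n f)"
  unfolding ext_supp_def ext_subst_apply
proof (intro allI impI)
  fix U assume w: "\<forall>k\<in>{1..n}. \<forall>S. w k S \<noteq> 0 \<longrightarrow> S \<subseteq> {1..n}" and U: "(\<Sum>S\<in>Pow {1..n}. \<phi> (f S) * ext_wedge w S U) \<noteq> 0"
  obtain S where S: "S \<in> Pow {1..n}" "\<phi> (f S) * ext_wedge w S U \<noteq> 0"
    using U by (rule sum.not_neutral_contains_not_neutral)
  then have S: "S \<in> Pow {1..n}" "ext_wedge w S U \<noteq> 0" by auto
  then have "ext_supp n (ext_wedge w S)"
    using w by (intro ext_supp_ext_wedge) (auto simp: ext_supp_def intro: finite_subset)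
  then show "U \<subseteq> {1..n}" using S by (simp add: ext_supp_def)
qed

definition ext_coeffs_in :: "nat \<Rightarrow> ext \<Rightarrow> bool" where
  "ext_coeffs_in n x \<longleftrightarrow> (\<forall>S. x S \<in> vars_in {1..n})"

lemma esgn_vars_in: "esgn T U \<in> vars_in A"
  by (simp add: esgn_def)

lemma ext_coeffs_in_mul: "ext_coeffs_in n a \<Longrightarrow> ext_coeffs_in n b \<Longrightarrow> ext_coeffs_in n (ext_mul a b)"
  unfolding ext_coeffs_in_def ext_mul_apply by (intro allI vars_in_sum vars_in_mult esgn_vars_in) auto

lemma ext_coeffs_in_one: "ext_coeffs_in n ext_one"
  by (simp add: ext_coeffs_in_def ext_one_def)

lemma ext_coeffs_in_ext_wedge: "finite S \<Longrightarrow> (\<forall>k\<in>S. ext_coeffs_in n (w k)) \<Longrightarrow> ext_coeffs_in n (ext_wedge w S)"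
proof (induction S rule: finite_linorder_min_induct)
  case empty
  then show ?case by (simp add: ext_coeffs_in_one)
next
  case (insert m S)
  then show ?case by (subst ext_wedge_insert_min) (auto intro: ext_coeffs_in_mul)
qed

lemma ext_coeffs_in_ext_subst:
  assumes "\<forall>k\<in>{1..n}. ext_coeffs_in n (w k)" "\<And>x. x \<in> vars_in {1..n} \<Longrightarrow> \<phi> x \<in> vars_in {1..n}" "ext_coeffs_in n f"
  shows "ext_coeffs_in n (ext_subst w \<phi> n f)"
  unfolding ext_coeffs_in_def ext_subst_apply
proof (intro allI vars_in_sum vars_in_mult)
  fix U S assume S: "S \<in> Pow {1..n}"
  then show "\<phi> (f S) \<in> vars_in {1..n}" using assms(2,3) by (simp add: ext_coeffs_in_def)
  have "ext_coeffs_in n (ext_wedge w S)" using S assms(1) by (intro ext_coeffs_in_ext_wedge) (auto intro: finite_subset)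
  then show "ext_wedge w S U \<in> vars_in {1..n}" by (simp add: ext_coeffs_in_def)
qed

section \<open>Linear forms in the generators and the action of \<open>s\<^sub>i\<close>\<close>

definition ext_lin :: "(nat \<Rightarrow> mpoly) \<Rightarrow> nat set \<Rightarrow> ext" where
  "ext_lin c K = (\<lambda>S. \<Sum>k\<in>K. c k * omega k S)"

lemma ext_finite_omega: "ext_finite (omega k)"
  by (simp add: ext_finite_def omega_def)

lemma omr_eq_ext_lin: "omr n j r = ext_lin (\<lambda>k. dc n k (pjr n j r)) {j..n}"
  by (simp add: omr_def ext_lin_def ext_sum_def ext_mul_scal_left ext_finite_omega)

lemma ext_lin_single: "finite K \<Longrightarrow> ext_lin c K {m} = (if m \<in> K then c m else 0)"
proof -
  assume fin: "finite K"
  have "ext_lin c K {m} = (\<Sum>k\<in>K. if k = m then c k else 0)"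
    unfolding ext_lin_def omega_def by (rule sum.cong) auto
  then show ?thesis using fin by simp
qed

lemma ext_lin_nonsingle: "\<forall>k. S \<noteq> {k} \<Longrightarrow> ext_lin c K S = 0"
  by (simp add: ext_lin_def omega_def)

lemma ext_linear_ext_lin: "ext_linear (ext_lin c K)"
  unfolding ext_linear_def using ext_lin_nonsingle by blast

lemma act_gen_apply: "act_gen i k U = omega k U + (if k = i then (X i - X (i + 1)) * omega (i + 1) U else 0)"
  by (simp add: act_gen_def ext_add_def ext_mul_scal_left ext_finite_omega)

lemma ext_linear_act_gen: "ext_linear (act_gen i k)"
  unfolding ext_linear_def act_gen_apply omega_def by auto

lemma ext_subst_omega:
  assumes "k \<in> {1..n}" "mpoly_hom \<phi>" "ext_linear (w k)"
  shows "ext_subst w \<phi> n (omega k) = w k"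
proof (rule ext)
  fix U
  have "ext_subst w \<phi> n (omega k) U = \<phi> (omega k {k}) * ext_wedge w {k} U"
    unfolding ext_subst_apply
    by (rule sum_eq_single) (use assms in \<open>auto simp: omega_def mpoly_hom_zero\<close>)
  then show "ext_subst w \<phi> n (omega k) U = w k U"
    using assms by (simp add: omega_def mpoly_hom_one ext_wedge_single)
qed

lemma act_ext_lin:
  assumes "K \<subseteq> {1..n}"
  shows "act n i (ext_lin c K) = (\<lambda>U. \<Sum>k\<in>K. swp i (c k) * act_gen i k U)"
proof -
  have "act n i (ext_lin c K) = (\<lambda>U. \<Sum>k\<in>K. ext_subst (act_gen i) (swp i) n (\<lambda>S. c k * omega k S) U)"
    unfolding act_eq_ext_subst ext_lin_def by (rule ext_subst_sum[OF mpoly_hom_swp])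
  also have "\<dots> = (\<lambda>U. \<Sum>k\<in>K. swp i (c k) * act_gen i k U)"
  proof (rule ext, rule sum.cong[OF refl])
    fix U k assume k: "k \<in> K"
    show "ext_subst (act_gen i) (swp i) n (\<lambda>S. c k * omega k S) U = swp i (c k) * act_gen i k U"
      unfolding ext_subst_cmul[OF mpoly_hom_swp] using k assms
      by (subst ext_subst_omega) (auto simp: mpoly_hom_swp ext_linear_act_gen)
  qed
  finally show ?thesis .
qed

lemma act_ext_lin_apply:
  assumes "K \<subseteq> {1..n}" "finite K"
  shows "act n i (ext_lin c K) U = (\<Sum>k\<in>K. swp i (c k) * omega k U)
           + (if i \<in> K then swp i (c i) * (X i - X (i + 1)) * omega (i + 1) U else 0)"
proof -
  have "act n i (ext_lin c K) U = (\<Sum>k\<in>K. swp i (c k) * omega k U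
          + (if k = i then swp i (c i) * (X i - X (i + 1)) * omega (i + 1) U else 0))"
    unfolding act_ext_lin[OF assms(1)] act_gen_apply by (rule sum.cong) (auto simp: algebra_simps)
  then show ?thesis using assms(2) by (simp add: sum.distrib)
qed

text \<open>The coefficient of \<open>\<omega>\<^sub>i\<^sub>+\<^sub>1\<close> in \<open>s\<^sub>i(\<Sum> c\<^sub>k \<omega>\<^sub>k)\<close> is \<open>s\<^sub>i c\<^sub>i\<^sub>+\<^sub>1 + (x\<^sub>i - x\<^sub>i\<^sub>+\<^sub>1) s\<^sub>i c\<^sub>i\<close>, which equals
  \<open>c\<^sub>i\<^sub>+\<^sub>1\<close> when \<open>c\<^sub>i = \<partial>\<^sub>i c\<^sub>i\<^sub>+\<^sub>1\<close>.\<close>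

lemma act_ext_lin_eq_self:
  assumes K: "K \<subseteq> {1..n}" "finite K"
    and sym: "\<And>m. m \<in> K \<Longrightarrow> m \<noteq> i + 1 \<or> i \<notin> K \<Longrightarrow> swp i (c m) = c m"
    and dd: "i \<in> K \<Longrightarrow> i + 1 \<in> K \<and> c i = dd i (c (i + 1))"
  shows "act n i (ext_lin c K) = ext_lin c K"
proof
  fix U
  show "act n i (ext_lin c K) U = ext_lin c K U"
  proof (cases "i \<in> K")
    case False
    then have "(\<Sum>k\<in>K. swp i (c k) * omega k U) = ext_lin c K U"
      using sym by (simp add: ext_lin_def)
    then show ?thesis using False by (simp add: act_ext_lin_apply[OF K])
  next
    case True
    then have i1: "i + 1 \<in> K" and ci: "c i = dd i (c (i + 1))" using dd by auto
    have rest: "(\<Sum>k\<in>K - {i + 1}. swp i (c k) * omega k U) = (\<Sum>k\<in>K - {i + 1}. c k * omega k U)"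
      using sym by (intro sum.cong) auto
    have coeff: "swp i (c (i + 1)) + swp i (c i) * (X i - X (i + 1)) = c (i + 1)"
      using X_diff_mult_dd[of i "c (i + 1)"] by (simp add: ci swp_dd algebra_simps)
    have "act n i (ext_lin c K) U = swp i (c (i + 1)) * omega (i + 1) U
        + (\<Sum>k\<in>K - {i + 1}. swp i (c k) * omega k U) + swp i (c i) * (X i - X (i + 1)) * omega (i + 1) U"
      using True i1 K(2) by (simp add: act_ext_lin_apply[OF K] sum.remove[of K "i + 1"])
    also have "\<dots> = (swp i (c (i + 1)) + swp i (c i) * (X i - X (i + 1))) * omega (i + 1) U
        + (\<Sum>k\<in>K - {i + 1}. c k * omega k U)"
      unfolding rest by (simp add: algebra_simps)
    also have "\<dots> = c (i + 1) * omega (i + 1) U + (\<Sum>k\<in>K - {i + 1}. c k * omega k U)"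
      by (simp only: coeff)
    also have "\<dots> = ext_lin c K U"
      using i1 K(2) by (simp add: ext_lin_def sum.remove[of K "i + 1"])
    finally show ?thesis .
  qed
qed

lemma omr_invariant:
  assumes j: "j \<in> {1..n}" and r: "r \<le> n - j" and i: "i \<in> {1..<n}"
  shows "act n i (omr n j r) = omr n j r"
  unfolding omr_eq_ext_lin
proof (rule act_ext_lin_eq_self)
  fix m assume m: "m \<in> {j..n}" "m \<noteq> i + 1 \<or> i \<notin> {j..n}"
  show "swp i (dc n m (pjr n j r)) = dc n m (pjr n j r)"
  proof (cases "m = i + 1")
    case True
    then have "m = j" using m by auto
    then show ?thesis using dc_pjr[OF j r] by simp
  next
    case False
    then show ?thesis
      using sym_except_dc_pjr[of m n j r] m i j by (auto simp: sym_except_def)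
  qed
qed (use j i in \<open>auto simp: dc_Suc\<close>)

section \<open>Unitriangular systems of generators\<close>

lemma ext_mul_linear_left:
  assumes v: "ext_linear v" and fin: "finite U"
  shows "ext_mul v P U = (\<Sum>l\<in>U. esgn {l} (U - {l}) * v {l} * P (U - {l}))"
proof -
  define g where "g T = esgn T (U - T) * v T * P (U - T)" for T
  have "g T = 0" if "T \<in> Pow U - (\<lambda>l. {l}) ` U" for T
    using that v unfolding ext_linear_def g_def by fastforce
  then have "ext_mul v P U = (\<Sum>T\<in>(\<lambda>l. {l}) ` U. g T)"
    unfolding ext_mul_apply g_def[symmetric] using fin by (intro sum.mono_neutral_right) auto
  also have "\<dots> = (\<Sum>l\<in>U. g {l})" by (subst sum.reindex) (auto simp: inj_on_def)
  finally show ?thesis by (simp add: g_def)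
qed

lemma esgn_singleton_less:
  assumes "\<forall>s\<in>S. m < s"
  shows "esgn {m} S = 1"
proof -
  have "inversions {m} S = {}" using assms by (auto simp: inversions_def)
  then show ?thesis by (simp add: esgn_conv_inversions)
qed

text \<open>If \<open>w\<^sub>k = \<omega>\<^sub>k + \<Sum>\<^sub>l\<^sub>>\<^sub>k c\<^sub>k\<^sub>l \<omega>\<^sub>l\<close>, then \<open>w\<^sub>S = \<omega>\<^sub>S\<close> plus terms \<open>\<omega>\<^sub>U\<close> with \<open>\<Sum>U > \<Sum>S\<close>: the weight
  \<open>\<Sum>U\<close> of a subset is a filtration for which such a system is unitriangular.\<close>

definition unitriangular :: "(nat \<Rightarrow> ext) \<Rightarrow> nat \<Rightarrow> bool" where
  "unitriangular w k \<longleftrightarrow> ext_linear (w k) \<and> w k {k} = 1 \<and> (\<forall>U. w k U \<noteq> 0 \<longrightarrow> (\<exists>l\<ge>k. U = {l}))"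

lemma ext_wedge_unitriangular_support:
  assumes "finite S" "\<forall>k\<in>S. unitriangular w k" "ext_wedge w S U \<noteq> 0"
  shows "U = S \<or> \<Sum>S < \<Sum>U"
  using assms
proof (induction S arbitrary: U rule: finite_linorder_min_induct)
  case empty
  then show ?case by (simp add: ext_one_def split: if_splits)
next
  case (insert m S)
  have lin: "ext_linear (w m)" and wm: "\<And>U. w m U \<noteq> 0 \<Longrightarrow> \<exists>l\<ge>m. U = {l}"
    using insert.prems(1) by (auto simp: unitriangular_def)
  have wedge: "ext_wedge w (insert m S) = ext_mul (w m) (ext_wedge w S)"
    using insert by (intro ext_wedge_insert_min) auto
  have fin: "finite U" using insert.prems(2) unfolding wedge using ext_mul_infinite by blast
  obtain l where l: "l \<in> U" "esgn {l} (U - {l}) * w m {l} * ext_wedge w S (U - {l}) \<noteq> 0"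
    using insert.prems(2)[unfolded wedge ext_mul_linear_left[OF lin fin]]
    by (rule sum.not_neutral_contains_not_neutral)
  then have "w m {l} \<noteq> 0" "ext_wedge w S (U - {l}) \<noteq> 0" by auto
  then have "m \<le> l" "U - {l} = S \<or> \<Sum>S < \<Sum>(U - {l})"
    using wm insert.IH[of "U - {l}"] insert.prems(1) by (metis singleton_inject, simp)
  moreover have "\<Sum>U = l + \<Sum>(U - {l})" using fin l(1) by (simp add: sum.remove)
  moreover have "m \<notin> S" using insert by auto
  then have "\<Sum>(insert m S) = m + \<Sum>S" using insert by simp
  ultimately show ?case using l(1) by (cases "U - {l} = S \<and> l = m") auto
qed

lemma ext_wedge_unitriangular_diag:
  assumes "finite S" "\<forall>k\<in>S. unitriangular w k"
  shows "ext_wedge w S S = 1"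
  using assms
proof (induction S rule: finite_linorder_min_induct)
  case empty
  then show ?case by (simp add: ext_one_def)
next
  case (insert m S)
  have lin: "ext_linear (w m)" and wm: "w m {m} = 1"
    using insert.prems by (auto simp: unitriangular_def)
  have mS: "m \<notin> S" using insert by auto
  have wedge: "ext_wedge w (insert m S) = ext_mul (w m) (ext_wedge w S)"
    using insert by (intro ext_wedge_insert_min) auto
  \<comment> \<open>removing any \<open>l > m\<close> instead of \<open>m\<close> leaves a set of weight below \<open>\<Sum>S\<close>\<close>
  have "ext_wedge w S (insert m S - {l}) = 0" if "l \<in> S" for l
  proof (rule ccontr)
    assume "ext_wedge w S (insert m S - {l}) \<noteq> 0"
    then have "insert m S - {l} = S \<or> \<Sum>S < \<Sum>(insert m S - {l})"
      using insert by (intro ext_wedge_unitriangular_support) auto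
    moreover have "\<Sum>(insert m S) = m + \<Sum>S" using insert mS by simp
    then have "\<Sum>(insert m S - {l}) + l = m + \<Sum>S"
      using sum.remove[of "insert m S" l "\<lambda>x. x"] insert(1) that by simp
    ultimately show False using insert that by auto
  qed
  then have "ext_wedge w (insert m S) (insert m S)
      = esgn {m} (insert m S - {m}) * w m {m} * ext_wedge w S (insert m S - {m})"
    unfolding wedge ext_mul_linear_left[OF lin finite_insert[THEN iffD2, OF insert(1)]]
    by (intro sum_eq_single) (use insert in auto)
  also have "\<dots> = 1"
    using insert wm mS by (simp add: esgn_singleton_less)
  finally show ?case .
qed

definition weight_ge :: "nat \<Rightarrow> ext \<Rightarrow> bool" where
  "weight_ge k a \<longleftrightarrow> (\<forall>T. a T \<noteq> 0 \<longrightarrow> k \<le> \<Sum>T)"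

lemma weight_ge_0: "weight_ge 0 a"
  by (simp add: weight_ge_def)

lemma weight_ge_Suc: "weight_ge k a \<Longrightarrow> (\<And>T. \<Sum>T = k \<Longrightarrow> a T = 0) \<Longrightarrow> weight_ge (Suc k) a"
  unfolding weight_ge_def by (metis le_antisym not_less_eq_eq)

lemma weight_ge_diff: "weight_ge k a \<Longrightarrow> weight_ge k b \<Longrightarrow> weight_ge k (\<lambda>S. a S - b S)"
  unfolding weight_ge_def by (metis diff_self)

lemma ext_subst_lowest_coeff:
  assumes \<phi>: "mpoly_hom \<phi>" and w: "\<forall>k\<in>{1..n}. unitriangular w k"
    and S0: "S0 \<subseteq> {1..n}" and h: "weight_ge (\<Sum>S0) h"
  shows "ext_subst w \<phi> n h S0 = \<phi> (h S0)"
proof -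
  have fin: "finite S" if "S \<subseteq> {1..n}" for S using that by (rule finite_subset) simp
  have "ext_subst w \<phi> n h S0 = \<phi> (h S0) * ext_wedge w S0 S0"
    unfolding ext_subst_apply
  proof (rule sum_eq_single)
    fix S assume S: "S \<in> Pow {1..n}" "S \<noteq> S0"
    have "ext_wedge w S S0 = 0" if "h S \<noteq> 0"
      using that S h w ext_wedge_unitriangular_support[of S w S0] fin[of S]
      by (force simp: weight_ge_def)
    then show "\<phi> (h S) * ext_wedge w S S0 = 0"
      by (cases "h S = 0") (simp_all add: mpoly_hom_zero[OF \<phi>])
  qed (use S0 in auto)
  also have "ext_wedge w S0 S0 = 1"
    using S0 w fin by (intro ext_wedge_unitriangular_diag) auto
  finally show ?thesis by simp
qed

lemma weight_ge_ext_subst: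
  assumes \<phi>: "mpoly_hom \<phi>" and w: "\<forall>k\<in>{1..n}. unitriangular w k" and h: "weight_ge k h"
  shows "weight_ge k (ext_subst w \<phi> n h)"
  unfolding weight_ge_def
proof (intro allI impI)
  fix U assume "ext_subst w \<phi> n h U \<noteq> 0"
  then obtain S where S: "S \<in> Pow {1..n}" "\<phi> (h S) * ext_wedge w S U \<noteq> 0"
    unfolding ext_subst_apply by (rule sum.not_neutral_contains_not_neutral)
  then have "h S \<noteq> 0" "ext_wedge w S U \<noteq> 0" by (auto simp: mpoly_hom_zero[OF \<phi>])
  moreover have "finite S" using S(1) by (auto intro: finite_subset)
  moreover have "k \<le> \<Sum>S" using h \<open>h S \<noteq> 0\<close> by (simp add: weight_ge_def)
  moreover have "U = S \<or> \<Sum>S < \<Sum>U"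
    using ext_wedge_unitriangular_support[of S w U] calculation w S(1) by auto
  ultimately show "k \<le> \<Sum>U" by auto
qed

lemma ext_supp_weight_ge_eq_zero:
  assumes "ext_supp n a" "weight_ge (Suc (\<Sum>{1..n})) a"
  shows "a S = 0"
proof (rule ccontr)
  assume "a S \<noteq> 0"
  then have "S \<subseteq> {1..n}" "Suc (\<Sum>{1..n}) \<le> \<Sum>S"
    using assms by (auto simp: ext_supp_def weight_ge_def)
  moreover have "\<Sum>S \<le> \<Sum>{1..n}" using calculation(1) by (intro sum_mono2) auto
  ultimately show False by simp
qed

lemma ext_carrier_iff: "a \<in> ext_carrier n \<longleftrightarrow> ext_supp n a \<and> ext_coeffs_in n a"
  by (simp add: ext_carrier_def ext_supp_def ext_coeffs_in_def Pn_eq_vars_in)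

lemma tens_carrier_iff:
  "f \<in> tens_carrier n \<longleftrightarrow> ext_supp n f \<and> ext_coeffs_in n f \<and> (\<forall>S. \<forall>i\<in>{1..<n}. swp i (f S) = f S)"
  by (auto simp: tens_carrier_def ext_carrier_iff Lam_def ext_coeffs_in_def Pn_eq_vars_in)

lemma LamOm_iff: "a \<in> LamOm n \<longleftrightarrow> ext_supp n a \<and> ext_coeffs_in n a \<and> (\<forall>i\<in>{1..<n}. act n i a = a)"
  by (simp add: LamOm_def ext_carrier_iff)

lemma ext_supp_add: "ext_supp n a \<Longrightarrow> ext_supp n b \<Longrightarrow> ext_supp n (\<lambda>S. a S + b S)"
  unfolding ext_supp_def by (metis add.right_neutral add_0)

lemma ext_supp_diff: "ext_supp n a \<Longrightarrow> ext_supp n b \<Longrightarrow> ext_supp n (\<lambda>S. a S - b S)"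
  unfolding ext_supp_def by (metis diff_self)

lemma tens_carrier_add:
  "f \<in> tens_carrier n \<Longrightarrow> g \<in> tens_carrier n \<Longrightarrow> (\<lambda>S. f S + g S) \<in> tens_carrier n"
  by (auto simp: tens_carrier_iff ext_coeffs_in_def swp_add intro: vars_in_add ext_supp_add)

lemma LamOm_diff:
  assumes "a \<in> LamOm n" "b \<in> LamOm n"
  shows "(\<lambda>S. a S - b S) \<in> LamOm n"
proof -
  have "act n i (\<lambda>S. a S - b S) = (\<lambda>U. act n i a U - act n i b U)" for i
    unfolding act_eq_ext_subst by (rule ext_subst_diff[OF mpoly_hom_swp])
  then show ?thesis
    using assms by (simp add: LamOm_iff ext_supp_diff ext_coeffs_in_def vars_in_diff)
qed

lemma unitriangular_act_gen: "unitriangular (act_gen i) k"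
  unfolding unitriangular_def using ext_linear_act_gen[of i k]
  by (auto simp: act_gen_apply omega_def split: if_splits)

text \<open>The generators \<open>\<omega>\<^sub>k\<close> themselves are unitriangular under \<open>s\<^sub>i\<close>, so the lowest-weight
  coefficients of an invariant element are symmetric.\<close>

lemma lowest_part_tens_carrier:
  assumes a: "a \<in> LamOm n" and k: "weight_ge k a"
  shows "(\<lambda>S. if \<Sum>S = k then a S else 0) \<in> tens_carrier n"
proof -
  have "swp i (a S) = a S" if i: "i \<in> {1..<n}" and S: "\<Sum>S = k" for i S
  proof (cases "a S = 0")
    case False
    then have "S \<subseteq> {1..n}" using a by (simp add: LamOm_iff ext_supp_def)
    then have "act n i a S = swp i (a S)"
      unfolding act_eq_ext_subst using k S
      by (intro ext_subst_lowest_coeff mpoly_hom_swp) (simp_all add: unitriangular_act_gen)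
    then show ?thesis using a i by (simp add: LamOm_iff)
  qed simp
  then show ?thesis
    using a by (auto simp: tens_carrier_iff LamOm_iff ext_supp_def ext_coeffs_in_def)
qed

section \<open>The generators \<open>omr\<close> and the isomorphism \<open>Phi\<close>\<close>

lemma ext_supp_ext_lin: "K \<subseteq> {1..n} \<Longrightarrow> finite K \<Longrightarrow> ext_supp n (ext_lin c K)"
  unfolding ext_supp_def
proof (intro allI impI)
  fix S assume K: "K \<subseteq> {1..n}" "finite K" and S: "ext_lin c K S \<noteq> 0"
  then obtain m where m: "S = {m}" using ext_lin_nonsingle by blast
  then have "m \<in> K" using S ext_lin_single[OF K(2), of c m] by (auto split: if_splits)
  then show "S \<subseteq> {1..n}" using K m by auto
qed

lemma ext_coeffs_in_ext_lin: "(\<forall>k\<in>K. c k \<in> vars_in {1..n}) \<Longrightarrow> ext_coeffs_in n (ext_lin c K)"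
  unfolding ext_coeffs_in_def ext_lin_def omega_def by (auto intro!: vars_in_sum vars_in_mult)

context
  fixes n :: nat and r :: "nat \<Rightarrow> nat"
  assumes r: "\<forall>j\<in>{1..n}. r j \<le> n - j"
begin

definition omega_r :: "nat \<Rightarrow> ext" where "omega_r j = omr n j (r j)"

lemma omega_r_eq_ext_lin: "omega_r j = ext_lin (\<lambda>k. dc n k (pjr n j (r j))) {j..n}"
  by (simp add: omega_r_def omr_eq_ext_lin)

lemma omega_r_linear: "ext_linear (omega_r k)"
  by (simp add: omega_r_eq_ext_lin ext_linear_ext_lin)

lemma omega_r_LamOm:
  assumes j: "j \<in> {1..n}"
  shows "omega_r j \<in> LamOm n"
proof -
  have "ext_supp n (omega_r j)"
    unfolding omega_r_eq_ext_lin by (rule ext_supp_ext_lin) (use j in auto)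
  moreover have "ext_coeffs_in n (omega_r j)"
    unfolding omega_r_eq_ext_lin by (intro ext_coeffs_in_ext_lin ballI dc_vars_in pjr_vars_in) (use j in auto)
  moreover have "act n i (omega_r j) = omega_r j" if "i \<in> {1..<n}" for i
    unfolding omega_r_def using r j that by (intro omr_invariant) auto
  ultimately show ?thesis by (simp add: LamOm_iff)
qed

lemma omega_r_unitriangular: "\<forall>k\<in>{1..n}. unitriangular omega_r k"
proof
  fix k assume k: "k \<in> {1..n}"
  have "omega_r k {k} = 1"
    unfolding omega_r_eq_ext_lin by (subst ext_lin_single) (use k r dc_pjr[OF k, of "r k"] in auto)
  moreover have "\<exists>l\<ge>k. U = {l}" if nz: "omega_r k U \<noteq> 0" for U
  proof -
    obtain m where m: "U = {m}"
      using nz ext_lin_nonsingle unfolding omega_r_eq_ext_lin by blast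
    have "omega_r k {m} = (if m \<in> {k..n} then dc n m (pjr n k (r k)) else 0)"
      unfolding omega_r_eq_ext_lin by (rule ext_lin_single) simp
    then have "m \<in> {k..n}" using nz m by (auto split: if_splits)
    then show ?thesis using m by auto
  qed
  ultimately show "unitriangular omega_r k" using omega_r_linear by (simp add: unitriangular_def)
qed

lemma Phi_eq_ext_subst_omega_r: "Phi n r = ext_subst omega_r (\<lambda>x. x) n"
  by (simp add: Phi_eq_ext_subst omega_r_def[abs_def])

lemma act_ext_wedge_omega_r:
  assumes i: "i \<in> {1..<n}" and S: "S \<subseteq> {1..n}"
  shows "act n i (ext_wedge omega_r S) = ext_wedge omega_r S"
proof -
  have "finite S" using S by (rule finite_subset) simp
  then show ?thesis
    using S
  proof (induction S rule: finite_linorder_min_induct)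
    case empty
    then show ?case by (simp add: act_eq_ext_subst ext_subst_one mpoly_hom_swp)
  next
    case (insert m S)
    have wedge: "ext_wedge omega_r (insert m S) = ext_mul (omega_r m) (ext_wedge omega_r S)"
      using insert by (intro ext_wedge_insert_min) auto
    have "act n i (omega_r m) = omega_r m" using insert i omega_r_LamOm[of m] by (simp add: LamOm_iff)
    then show ?case
      using insert unfolding wedge act_eq_ext_subst
      by (simp add: ext_subst_mult[OF mpoly_hom_swp ext_linear_act_gen])
  qed
qed

lemma Phi_LamOm:
  assumes f: "f \<in> tens_carrier n"
  shows "Phi n r f \<in> LamOm n"
proof -
  have gens_supp: "\<forall>k\<in>{1..n}. ext_supp n (omega_r k)"
    and gens_coeffs: "\<forall>k\<in>{1..n}. ext_coeffs_in n (omega_r k)"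
    using omega_r_LamOm by (simp_all add: LamOm_iff)
  have "act n i (Phi n r f) = Phi n r f" if i: "i \<in> {1..<n}" for i
  proof -
    have summand: "act n i (\<lambda>U. f S * ext_wedge omega_r S U) = (\<lambda>U. f S * ext_wedge omega_r S U)"
      if "S \<in> Pow {1..n}" for S
    proof -
      have "act n i (\<lambda>U. f S * ext_wedge omega_r S U) = (\<lambda>U. swp i (f S) * act n i (ext_wedge omega_r S) U)"
        unfolding act_eq_ext_subst by (rule ext_subst_cmul[OF mpoly_hom_swp])
      then show ?thesis using f i that act_ext_wedge_omega_r[OF i, of S] by (simp add: tens_carrier_iff)
    qed
    have Phi_f: "Phi n r f = (\<lambda>U. \<Sum>S\<in>Pow {1..n}. f S * ext_wedge omega_r S U)"
      by (simp add: Phi_eq_ext_subst_omega_r ext_subst_apply[abs_def])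
    have "act n i (\<lambda>U. \<Sum>S\<in>Pow {1..n}. f S * ext_wedge omega_r S U)
        = (\<lambda>U. \<Sum>S\<in>Pow {1..n}. act n i (\<lambda>V. f S * ext_wedge omega_r S V) U)"
      unfolding act_eq_ext_subst by (rule ext_subst_sum[OF mpoly_hom_swp])
    then show ?thesis unfolding Phi_f using summand by simp
  qed
  moreover have "ext_supp n (Phi n r f)"
    unfolding Phi_eq_ext_subst_omega_r using gens_supp by (rule ext_supp_ext_subst)
  moreover have "ext_coeffs_in n (Phi n r f)"
    unfolding Phi_eq_ext_subst_omega_r using gens_coeffs f by (intro ext_coeffs_in_ext_subst) (auto simp: tens_carrier_iff)
  ultimately show ?thesis by (simp add: LamOm_iff)
qed

lemma Phi_diff: "Phi n r (\<lambda>S. a S - b S) = (\<lambda>U. Phi n r a U - Phi n r b U)"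
  unfolding Phi_eq_ext_subst_omega_r by (rule ext_subst_diff[OF mpoly_hom_id])

lemma Phi_ext_add: "Phi n r (ext_add a b) = ext_add (Phi n r a) (Phi n r b)"
  unfolding Phi_eq_ext_subst_omega_r ext_add_def by (rule ext_subst_add[OF mpoly_hom_id])

lemma Phi_ext_mul: "Phi n r (ext_mul a b) = ext_mul (Phi n r a) (Phi n r b)"
  unfolding Phi_eq_ext_subst_omega_r by (rule ext_subst_mult[OF mpoly_hom_id omega_r_linear])

lemma Phi_ext_one: "Phi n r ext_one = ext_one"
  unfolding Phi_eq_ext_subst_omega_r by (rule ext_subst_one[OF mpoly_hom_id])

lemma Phi_lowest_coeff: "S \<subseteq> {1..n} \<Longrightarrow> weight_ge (\<Sum>S) f \<Longrightarrow> Phi n r f S = f S"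
  unfolding Phi_eq_ext_subst_omega_r by (rule ext_subst_lowest_coeff[OF mpoly_hom_id omega_r_unitriangular])

lemma weight_ge_Phi: "weight_ge k f \<Longrightarrow> weight_ge k (Phi n r f)"
  unfolding Phi_eq_ext_subst_omega_r by (rule weight_ge_ext_subst[OF mpoly_hom_id omega_r_unitriangular])

lemma Phi_inj: "inj_on (Phi n r) (tens_carrier n)"
proof (rule inj_onI)
  fix a b assume "a \<in> tens_carrier n" "b \<in> tens_carrier n" and eq: "Phi n r a = Phi n r b"
  define h where "h = (\<lambda>S. a S - b S)"
  have supp: "ext_supp n h"
    unfolding h_def using \<open>a \<in> _\<close> \<open>b \<in> _\<close> by (intro ext_supp_diff) (simp_all add: tens_carrier_iff)
  have Phi_h: "Phi n r h U = 0" for U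
    unfolding h_def Phi_diff eq by simp
  have "weight_ge k h" for k
  proof (induction k)
    case (Suc k)
    have "h T = 0" if "\<Sum>T = k" for T
      using Phi_lowest_coeff[of T h] Suc supp that Phi_h by (cases "h T = 0") (auto simp: ext_supp_def)
    then show ?case by (rule weight_ge_Suc[OF Suc.IH])
  qed (rule weight_ge_0)
  then show "a = b"
    using ext_supp_weight_ge_eq_zero[OF supp] by (auto simp: h_def fun_eq_iff)
qed

text \<open>Surjectivity by descending induction on the weight: subtract the image of the
  lowest-weight part, which lies in \<open>tens_carrier n\<close>.\<close>

lemma Phi_surj_weight_ge:
  assumes "a \<in> LamOm n" "weight_ge k a"
  shows "\<exists>f\<in>tens_carrier n. Phi n r f = a"
  using assms
proof (induction "Suc (\<Sum>{1..n}) - k" arbitrary: k a)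
  case 0
  then have "weight_ge (Suc (\<Sum>{1..n})) a" by (auto simp: weight_ge_def)
  then have "a = (\<lambda>S. 0)"
    using ext_supp_weight_ge_eq_zero 0 by (auto simp: LamOm_iff)
  moreover have "(\<lambda>S. 0) \<in> tens_carrier n" "Phi n r (\<lambda>S. 0) = (\<lambda>S. 0)"
    by (simp_all add: tens_carrier_iff ext_supp_def ext_coeffs_in_def Phi_eq_ext_subst_omega_r
        ext_subst_apply[abs_def])
  ultimately show ?case by blast
next
  case (Suc d)
  define f where "f = (\<lambda>S. if \<Sum>S = k then a S else 0)"
  define b where "b = (\<lambda>S. a S - Phi n r f S)"
  have f: "f \<in> tens_carrier n" "weight_ge k f"
    using lowest_part_tens_carrier[OF Suc.prems] Suc.prems(2) by (auto simp: f_def weight_ge_def)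
  have b: "b \<in> LamOm n"
    unfolding b_def by (intro LamOm_diff Suc.prems(1) Phi_LamOm f)
  have "Phi n r f T = a T" if "\<Sum>T = k" for T
  proof (cases "T \<subseteq> {1..n}")
    case True
    then show ?thesis using Phi_lowest_coeff[OF True] f(2) that by (simp add: f_def)
  next
    case False
    then have "a T = 0" "Phi n r f T = 0"
      using Suc.prems(1) Phi_LamOm[OF f(1)] by (auto simp: LamOm_iff ext_supp_def)
    then show ?thesis by simp
  qed
  then have "weight_ge (Suc k) b"
    unfolding b_def by (intro weight_ge_Suc weight_ge_diff Suc.prems(2) weight_ge_Phi f(2)) simp
  moreover have "d = Suc (\<Sum>{1..n}) - Suc k" using Suc.hyps(2) by simp
  ultimately obtain g where "g \<in> tens_carrier n" "Phi n r g = b"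
    using Suc.hyps(1) b by blast
  then have "(\<lambda>S. f S + g S) \<in> tens_carrier n" "Phi n r (\<lambda>S. f S + g S) = a"
    using f Phi_ext_add[of f g] by (simp_all add: tens_carrier_add ext_add_def b_def)
  then show ?case by blast
qed

lemma omr_LamOm: "j \<in> {1..n} \<Longrightarrow> omr n j (r j) \<in> LamOm n"
  using omega_r_LamOm by (simp add: omega_r_def)

lemma Phi_bij: "bij_betw (Phi n r) (tens_carrier n) (LamOm n)"
  unfolding bij_betw_def
  using Phi_inj Phi_LamOm Phi_surj_weight_ge[OF _ weight_ge_0] by blast

end

theorem mainTheorem10:
  fixes n :: nat
  shows "(\<forall>j\<in>{1..n}. \<forall>r\<le>n - j. pjr n j r \<in> Pn1 n \<and> dc n j (pjr n j r) = 1)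
    \<and> (\<forall>r :: nat \<Rightarrow> nat. (\<forall>j\<in>{1..n}. r j \<le> n - j) \<longrightarrow>
         (\<forall>j\<in>{1..n}. omr n j (r j) \<in> LamOm n)
       \<and> bij_betw (Phi n r) (tens_carrier n) (LamOm n)
       \<and> (\<forall>a\<in>tens_carrier n. \<forall>b\<in>tens_carrier n.
            Phi n r (ext_add a b) = ext_add (Phi n r a) (Phi n r b)
          \<and> Phi n r (ext_mul a b) = ext_mul (Phi n r a) (Phi n r b))
       \<and> Phi n r ext_one = ext_one)
    \<and> (\<forall>j\<in>{1..n}. pjr n j 0 = elem {1..<n} (n - j)
         \<and> pjr n j (n - j) = (-1) ^ (n - j) * hcompl {n} (n - j)
         \<and> pjr n j (n - j) = (-1) ^ (n - j) * X n ^ (n - j))"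
proof (intro conjI ballI allI impI)
  fix j r assume j: "j \<in> {1..n}" and r: "r \<le> n - j"
  show "pjr n j r \<in> Pn1 n" using j by (intro pjr_Pn1) auto
  show "dc n j (pjr n j r) = 1" using j r by (rule dc_pjr)
next
  fix r :: "nat \<Rightarrow> nat" assume r: "\<forall>j\<in>{1..n}. r j \<le> n - j"
  fix j assume "j \<in> {1..n}"
  then show "omr n j (r j) \<in> LamOm n" by (rule omr_LamOm[OF r])
next
  fix r :: "nat \<Rightarrow> nat" assume r: "\<forall>j\<in>{1..n}. r j \<le> n - j"
  show "bij_betw (Phi n r) (tens_carrier n) (LamOm n)" by (rule Phi_bij[OF r])
  show "Phi n r ext_one = ext_one" by (rule Phi_ext_one[OF r])
  fix a b
  show "Phi n r (ext_add a b) = ext_add (Phi n r a) (Phi n r b)" by (rule Phi_ext_add[OF r])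
  show "Phi n r (ext_mul a b) = ext_mul (Phi n r a) (Phi n r b)" by (rule Phi_ext_mul[OF r])
next
  fix j
  show "pjr n j 0 = elem {1..<n} (n - j)" by (simp add: pjr_def)
  show top: "pjr n j (n - j) = (-1) ^ (n - j) * X n ^ (n - j)" by (simp add: pjr_def elem_0)
  then show "pjr n j (n - j) = (-1) ^ (n - j) * hcompl {n} (n - j)" by (simp add: hcompl_singleton)
qed

end
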